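(* Let $\mathcal{A}$ be a C*-algebra with identity $1$, let $\Gamma$ be a totally ordered abelian group with identity $0$ and positive cone $\Gamma^+=\{x\in\Gamma:0\le x\}$, and let $\alpha:\Gamma^+\to\mathrm{End}(\mathcal{A})$ be a semigroup homomorphism into the $*$-endomorphisms of $\mathcal{A}$ (so $\alpha_0=\mathrm{Id}$ and $\alpha_x\circ\alpha_y=\alpha_{x+y}$ for $x,y\in\Gamma^+$). The following are equivalent: 1) there exists a complete transfer action $L$ for $(\mathcal{A},\Gamma^+,\alpha)$; 2) (i) there exists a non-degenerate transfer action $L$ for $(\mathcal{A},\Gamma^+,\alpha)$, and (ii) $\alpha_x(\mathcal{A})$ is a hereditary subalgebra of $\mathcal{A}$ for each $x\in\Gamma^+$; 3) (i) there exists a family $\{P_x\}_{x\in\Gamma^+}$ of central orthogonal projections in $\mathcal{A}$ such that (a) $\alpha_x(P_{x+y})=\alpha_x(1)P_y$ for all $x,y\in\Gamma^+$, and (b) the maps $\alpha_x:P_x\mathcal{A}\to\alpha_x(\mathcal{A})$ are $*$-isomorphisms; and (ii) $\alpha_x(\mathcal{A})=\alpha_x(1)\mathcal{A}\alpha_x(1)$ for each $x\in\Gamma^+$. Moreover, the objects in 1)–3) are uniquely determined (the transfer action $L$ in 1) and 2) is unique, and the family $\{P_x\}_{x\in\Gamma^+}$ in 3) is unique), and they are related by $P_x=L_x(1)$ for $x\in\Gamma^+$ and $$L_x(a)=\alpha_x^{-1}(\alpha_x(1)a\alpha_x(1)),\quad a\in\mathcal{A},$$ where $\alpha_x^{-1}:\alpha_x(\mathcal{A})\to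 P_x\mathcal{A}$ is the inverse of the $*$-isomorphism $\alpha_x:P_x\mathcal{A}\to\alpha_x(\mathcal{A})$.
   Context: A transfer action for $(\mathcal{A},\Gamma^+,\alpha)$ is a family $L=\{L_x\}_{x\in\Gamma^+}$ of continuous, linear, positive maps $L_x:\mathcal{A}\to\mathcal{A}$ such that $L_{x+y}=L_y\circ L_x$ for all $x,y\in\Gamma^+$ and $L_x(\alpha_x(a)b)=aL_x(b)$ for all $a,b\in\mathcal{A}$, $x\in\Gamma^+$. A transfer action is non-degenerate if for each $x\in\Gamma^+$ the composition $\alpha_x\circ L_x$ is a conditional expectation onto $\alpha_x(\mathcal{A})$ (equivalently $\alpha_x\circ L_x\circ\alpha_x=\alpha_x$, equivalently $\alpha_x(L_x(1))=\alpha_x(1)$). A transfer action is complete if $\alpha_x(L_x(a))=\alpha_x(1)a\alpha_x(1)$ for all $x\in\Gamma^+$, $a\in\mathcal{A}$. *)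

theory Defs
  imports "HOL-Analysis.Analysis"
begin

class cstar_algebra = real_normed_algebra_1 + banach +
  fixes cscale :: "complex \<Rightarrow> 'a \<Rightarrow> 'a" (infixr "*\<^sub>C" 75)
    and cstar :: "'a \<Rightarrow> 'a"
  assumes cscale_of_real: "complex_of_real r *\<^sub>C a = r *\<^sub>R a"
    and cscale_add_right: "c *\<^sub>C (a + b) = c *\<^sub>C a + c *\<^sub>C b"
    and cscale_add_left: "(c + d) *\<^sub>C a = c *\<^sub>C a + d *\<^sub>C a"
    and cscale_cscale: "c *\<^sub>C (d *\<^sub>C a) = (c * d) *\<^sub>C a"
    and cscale_mult_left: "(c *\<^sub>C a) * b = c *\<^sub>C (a * b)"
    and cscale_mult_right: "a * (c *\<^sub>C b) = c *\<^sub>C (a * b)"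
    and norm_cscale: "norm (c *\<^sub>C a) = cmod c * norm a"
    and cstar_cstar: "cstar (cstar a) = a"
    and cstar_add: "cstar (a + b) = cstar a + cstar b"
    and cstar_cscale: "cstar (c *\<^sub>C a) = cnj c *\<^sub>C cstar a"
    and cstar_mult: "cstar (a * b) = cstar b * cstar a"
    and cstar_identity: "norm (cstar a * a) = norm a * norm a"

definition clinear_map :: "('a::cstar_algebra \<Rightarrow> 'a) \<Rightarrow> bool" where
  "clinear_map f \<longleftrightarrow> (\<forall>a b. f (a + b) = f a + f b) \<and> (\<forall>c a. f (c *\<^sub>C a) = c *\<^sub>C f a)"

definition positive_el :: "'a::cstar_algebra \<Rightarrow> bool" where
  "positive_el a \<longleftrightarrow> (\<exists>b. a = cstar b * b)"

definition positive_map :: "('a::cstar_algebra \<Rightarrow> 'a) \<Rightarrow> bool" where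
  "positive_map f \<longleftrightarrow> (\<forall>a. positive_el a \<longrightarrow> positive_el (f a))"

definition star_endo :: "('a::cstar_algebra \<Rightarrow> 'a) \<Rightarrow> bool" where
  "star_endo f \<longleftrightarrow> clinear_map f \<and> (\<forall>a b. f (a * b) = f a * f b)
     \<and> (\<forall>a. f (cstar a) = cstar (f a))"

definition endo_semigroup :: "('g::linordered_ab_group_add \<Rightarrow> 'a::cstar_algebra \<Rightarrow> 'a) \<Rightarrow> bool" where
  "endo_semigroup \<alpha> \<longleftrightarrow> (\<forall>x. 0 \<le> x \<longrightarrow> star_endo (\<alpha> x)) \<and> \<alpha> 0 = id
     \<and> (\<forall>x y. 0 \<le> x \<longrightarrow> 0 \<le> y \<longrightarrow> \<alpha> x \<circ> \<alpha> y = \<alpha> (x + y))"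

definition transfer_action ::
  "('g::linordered_ab_group_add \<Rightarrow> 'a::cstar_algebra \<Rightarrow> 'a) \<Rightarrow> ('g \<Rightarrow> 'a \<Rightarrow> 'a) \<Rightarrow> bool" where
  "transfer_action \<alpha> L \<longleftrightarrow>
     (\<forall>x. 0 \<le> x \<longrightarrow> continuous_on UNIV (L x) \<and> clinear_map (L x) \<and> positive_map (L x))
   \<and> (\<forall>x y. 0 \<le> x \<longrightarrow> 0 \<le> y \<longrightarrow> L (x + y) = L y \<circ> L x)
   \<and> (\<forall>x a b. 0 \<le> x \<longrightarrow> L x (\<alpha> x a * b) = a * L x b)"

text \<open>Non-degenerate: \<alpha>_x \<circ> L_x \<circ> \<alpha>_x = \<alpha>_x (one of the equivalent forms given in the paper).\<close>
definition nondegenerate_transfer_action ::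
  "('g::linordered_ab_group_add \<Rightarrow> 'a::cstar_algebra \<Rightarrow> 'a) \<Rightarrow> ('g \<Rightarrow> 'a \<Rightarrow> 'a) \<Rightarrow> bool" where
  "nondegenerate_transfer_action \<alpha> L \<longleftrightarrow> transfer_action \<alpha> L
     \<and> (\<forall>x. 0 \<le> x \<longrightarrow> \<alpha> x \<circ> L x \<circ> \<alpha> x = \<alpha> x)"

definition complete_transfer_action ::
  "('g::linordered_ab_group_add \<Rightarrow> 'a::cstar_algebra \<Rightarrow> 'a) \<Rightarrow> ('g \<Rightarrow> 'a \<Rightarrow> 'a) \<Rightarrow> bool" where
  "complete_transfer_action \<alpha> L \<longleftrightarrow> transfer_action \<alpha> L
     \<and> (\<forall>x a. 0 \<le> x \<longrightarrow> \<alpha> x (L x a) = \<alpha> x 1 * a * \<alpha> x 1)"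

definition cstar_subalgebra :: "'a::cstar_algebra set \<Rightarrow> bool" where
  "cstar_subalgebra B \<longleftrightarrow> 0 \<in> B \<and> (\<forall>a\<in>B. \<forall>b\<in>B. a + b \<in> B \<and> a * b \<in> B)
     \<and> (\<forall>c. \<forall>a\<in>B. c *\<^sub>C a \<in> B) \<and> (\<forall>a\<in>B. cstar a \<in> B) \<and> closed B"

definition hereditary_subalgebra :: "'a::cstar_algebra set \<Rightarrow> bool" where
  "hereditary_subalgebra B \<longleftrightarrow> cstar_subalgebra B
     \<and> (\<forall>a b. b \<in> B \<longrightarrow> positive_el a \<longrightarrow> positive_el (b - a) \<longrightarrow> a \<in> B)"

definition central_projection :: "'a::cstar_algebra \<Rightarrow> bool" where
  "central_projection p \<longleftrightarrow> cstar p = p \<and> p * p = p \<and> (\<forall>a. p * a = a * p)"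

text \<open>Condition 3(i): central projections P_x with \<alpha>_x(P_{x+y}) = \<alpha>_x(1) P_y and
  \<alpha>_x : P_x A \<rightarrow> \<alpha>_x(A) bijective (it is a *-homomorphism as a restriction of \<alpha>_x).\<close>
definition projection_family ::
  "('g::linordered_ab_group_add \<Rightarrow> 'a::cstar_algebra \<Rightarrow> 'a) \<Rightarrow> ('g \<Rightarrow> 'a) \<Rightarrow> bool" where
  "projection_family \<alpha> P \<longleftrightarrow> (\<forall>x. 0 \<le> x \<longrightarrow> central_projection (P x))
     \<and> (\<forall>x y. 0 \<le> x \<longrightarrow> 0 \<le> y \<longrightarrow> \<alpha> x (P (x + y)) = \<alpha> x 1 * P y)
     \<and> (\<forall>x. 0 \<le> x \<longrightarrow> bij_betw (\<alpha> x) (range (\<lambda>a. P x * a)) (range (\<alpha> x)))"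

end

theory Submission
  imports Defs "HOL-Computational_Algebra.Formal_Power_Series"
begin

text \<open>
  On each level x, a non-degenerate transfer map L_x produces the central projection
  P_x = L_x(1): the relation L_x(\<alpha>_x(a) b) = a L_x(b) makes L_x(1) central, non-degeneracy makes it
  idempotent, and \<alpha>_x is injective on P_x A and kills 1 - P_x. Since L_x only sees the corner
  \<alpha>_x(1) A \<alpha>_x(1), the transfer action is complete exactly when the range of every \<alpha>_x is
  that corner, and then L_x(a) is forced to be the unique preimage of \<alpha>_x(1) a \<alpha>_x(1) in P_x A.
  Corners are hereditary, and conversely a hereditary range containing the projection
  \<alpha>_x(1) contains all of \<alpha>_x(1) b* b \<alpha>_x(1), hence the whole corner.
  Given the projections, this formula defines a transfer action: positivity holds because a
  positive element of the corner has a square root in the corner, continuity because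
  positive maps are bounded, and the semigroup law follows from \<alpha>_x(P_(x+y)) = \<alpha>_x(1) P_y.

  Since the C*-algebra is given by its axioms only, positivity has to be derived directly:
  a self-adjoint a counts as positive if \<parallel>t - a\<parallel> \<le> t for some t \<ge> 0, square roots come from
  the binomial series of \<surd>(1 - u), and that every b* b is positive is shown by the classical
  argument comparing the invertibility of b* b + \<epsilon> and b b* + \<epsilon>.
\<close>

section \<open>Involution and self-adjoint elements\<close>

declare cstar_cstar [simp] cstar_add [simp] cstar_mult [simp]

lemma cstar_zero [simp]: "cstar (0::'a::cstar_algebra) = 0"
  using cstar_add[of "0::'a" 0] by simp

lemma cstar_minus [simp]: "cstar (- a) = - cstar (a::'a::cstar_algebra)"
  using cstar_add[of a "- a"] by (simp add: eq_neg_iff_add_eq_0 add.commute)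

lemma cstar_diff [simp]: "cstar (a - b) = cstar a - cstar (b::'a::cstar_algebra)"
  using cstar_add[of a "- b"] by simp

lemma cstar_one [simp]: "cstar (1::'a::cstar_algebra) = 1"
  using cstar_mult[of "cstar 1" "1::'a"] by simp

lemma cscale_minus_left: "(- c) *\<^sub>C a = - (c *\<^sub>C (a::'a::cstar_algebra))"
  using cscale_add_left[of c "- c" a] cscale_of_real[of 0 a]
  by (simp add: eq_neg_iff_add_eq_0 add.commute)

lemma cstar_scaleR [simp]: "cstar (r *\<^sub>R a) = r *\<^sub>R cstar (a::'a::cstar_algebra)"
  by (metis cscale_of_real cstar_cscale complex_cnj_complex_of_real)

lemma cstar_power [simp]: "cstar (a ^ n) = cstar a ^ n" for a :: "'a::cstar_algebra"
  by (induction n) (simp_all add: power_commutes)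

lemma norm_cstar [simp]: "norm (cstar a) = norm (a::'a::cstar_algebra)"
proof -
  have le: "norm b \<le> norm (cstar b)" for b :: 'a
  proof (cases "b = 0")
    case False
    have "norm b * norm b = norm (cstar b * b)" by (simp add: cstar_identity)
    also have "\<dots> \<le> norm (cstar b) * norm b" by (rule norm_mult_ineq)
    finally show ?thesis using False by simp
  qed simp
  show ?thesis using le[of a] le[of "cstar a"] by simp
qed

lemma bounded_linear_cstar: "bounded_linear (cstar :: 'a::cstar_algebra \<Rightarrow> 'a)"
  by (rule bounded_linear_intro[where K=1]) auto

lemma cstar_suminf: "summable f \<Longrightarrow> cstar (suminf f) = (\<Sum>n. cstar (f n::'a::cstar_algebra))"
  by (rule bounded_linear.suminf[OF bounded_linear_cstar])

lemma norm_cstar_mult_self: "norm (cstar a * a) = norm (a::'a::cstar_algebra) ^ 2"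
  by (simp add: cstar_identity power2_eq_square)

definition selfadjoint :: "'a::cstar_algebra \<Rightarrow> bool" where
  "selfadjoint a \<longleftrightarrow> cstar a = a"

lemma selfadjoint_norm_square: "selfadjoint a \<Longrightarrow> norm (a * a) = norm (a::'a::cstar_algebra) ^ 2"
  using norm_cstar_mult_self[of a] by (simp add: selfadjoint_def)

lemma selfadjoint_one [simp]: "selfadjoint 1"
  and selfadjoint_add: "selfadjoint a \<Longrightarrow> selfadjoint b \<Longrightarrow> selfadjoint (a + b)"
  and selfadjoint_diff: "selfadjoint a \<Longrightarrow> selfadjoint b \<Longrightarrow> selfadjoint (a - b)"
  and selfadjoint_minus: "selfadjoint a \<Longrightarrow> selfadjoint (- a)"
  and selfadjoint_scaleR: "selfadjoint a \<Longrightarrow> selfadjoint (r *\<^sub>R a)"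
  and selfadjoint_cstar_mult: "selfadjoint (cstar x * x)"
  and selfadjoint_mult_commuting: "selfadjoint a \<Longrightarrow> selfadjoint b \<Longrightarrow> a * b = b * a \<Longrightarrow> selfadjoint (a * b)"
  and selfadjoint_mult_self: "selfadjoint a \<Longrightarrow> selfadjoint (a * a)"
  by (simp_all add: selfadjoint_def)

lemma selfadjoint_cube_eq_zero:
  assumes "selfadjoint q" "q * q * q = 0" shows "q = (0::'a::cstar_algebra)"
proof -
  have "(q * q) * (q * q) = 0" using assms(2) by (metis mult.assoc mult_zero_left)
  then have "norm (q * q) = 0" using selfadjoint_norm_square[OF selfadjoint_mult_self[OF assms(1)]] by simp
  then show ?thesis using selfadjoint_norm_square[OF assms(1)] by simp
qed

section \<open>Real and imaginary parts\<close>

definition imag_one :: "'a::cstar_algebra" where "imag_one = \<i> *\<^sub>C 1"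

lemma imag_one_mult: "imag_one * a = \<i> *\<^sub>C a"
  by (simp add: imag_one_def cscale_mult_left)

lemma imag_one_commute: "imag_one * a = a * imag_one"
  unfolding imag_one_mult by (simp add: imag_one_def cscale_mult_right)

lemma imag_one_square: "imag_one * imag_one = (-1 :: 'a::cstar_algebra)"
proof -
  have "imag_one * imag_one = (\<i> * \<i>) *\<^sub>C (1::'a)"
    unfolding imag_one_mult[of imag_one] by (simp add: imag_one_def cscale_cscale)
  also have "\<dots> = -1" by (simp add: cscale_minus_left cscale_of_real[of 1, simplified])
  finally show ?thesis .
qed

lemma cstar_imag_one: "cstar imag_one = - (imag_one::'a::cstar_algebra)"
  by (simp add: imag_one_def cstar_cscale cscale_minus_left)

lemma norm_imag_one [simp]: "norm (imag_one::'a::cstar_algebra) = 1"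
  by (simp add: imag_one_def norm_cscale)

lemma imag_one_mult_mult: "(imag_one * a) * (imag_one * b) = - (a * (b::'a::cstar_algebra))"
  by (metis imag_one_commute imag_one_square mult.assoc mult_minus1)

definition re_part :: "'a::cstar_algebra \<Rightarrow> 'a" where
  "re_part a = (1/2::real) *\<^sub>R (a + cstar a)"

definition im_part :: "'a::cstar_algebra \<Rightarrow> 'a" where
  "im_part a = (-1/2::real) *\<^sub>R (imag_one * (a - cstar a))"

lemma selfadjoint_re_part: "selfadjoint (re_part a)"
  by (simp add: re_part_def selfadjoint_def add.commute)

lemma selfadjoint_im_part: "selfadjoint (im_part a)"
proof -
  have "cstar (imag_one * (a - cstar a)) = (cstar a - a) * (- imag_one)" by (simp add: cstar_imag_one)
  also have "\<dots> = imag_one * (a - cstar a)" by (simp add: imag_one_commute algebra_simps)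
  finally show ?thesis by (simp add: im_part_def selfadjoint_def)
qed

lemma re_im_decomp: "a = re_part a + imag_one * im_part a"
proof -
  have "imag_one * im_part a = (-1/2::real) *\<^sub>R ((imag_one * imag_one) * (a - cstar a))"
    by (simp add: im_part_def mult.assoc)
  also have "\<dots> = (1/2::real) *\<^sub>R (a - cstar a)" by (simp add: imag_one_square algebra_simps)
  finally have "re_part a + imag_one * im_part a = (1/2::real) *\<^sub>R (a + cstar a) + (1/2::real) *\<^sub>R (a - cstar a)"
    by (simp add: re_part_def)
  also have "\<dots> = (1/2::real) *\<^sub>R ((a + cstar a) + (a - cstar a))" by (simp only: scaleR_add_right)
  also have "(a + cstar a) + (a - cstar a) = 2 *\<^sub>R a" by (simp add: scaleR_2)
  finally show ?thesis by simp
qed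

lemma re_im_cstar: "cstar a = re_part a - imag_one * im_part a"
proof -
  have "cstar a = cstar (re_part a + imag_one * im_part a)" using re_im_decomp[of a] by simp
  also have "\<dots> = re_part a + im_part a * (- imag_one)"
    using selfadjoint_re_part[of a] selfadjoint_im_part[of a] by (simp add: selfadjoint_def cstar_imag_one)
  finally show ?thesis by (simp add: imag_one_commute)
qed

lemma norm_re_part: "norm (re_part a) \<le> norm a"
proof -
  have "norm (re_part a) = (1/2) * norm (a + cstar a)" by (simp add: re_part_def)
  also have "\<dots> \<le> (1/2) * (norm a + norm (cstar a))" by (intro mult_left_mono norm_triangle_ineq) auto
  finally show ?thesis by simp
qed

lemma norm_im_part: "norm (im_part a) \<le> norm a"
proof -
  have "norm (im_part a) = (1/2) * norm (imag_one * (a - cstar a))" by (simp add: im_part_def)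
  also have "\<dots> \<le> (1/2) * (norm (imag_one::'a) * norm (a - cstar a))"
    by (intro mult_left_mono norm_mult_ineq) auto
  also have "\<dots> \<le> (1/2) * (norm a + norm (cstar a))"
    using norm_triangle_ineq4[of a "cstar a"] by simp
  finally show ?thesis by simp
qed

lemma mult_cstar_add_cstar_mult:
  "y * cstar y + cstar y * y = 2 *\<^sub>R (re_part y * re_part y + im_part y * im_part y)"
proof -
  define r t where "r = re_part y" and "t = imag_one * im_part y"
  have y: "y = r + t" and cy: "cstar y = r - t"
    unfolding r_def t_def by (rule re_im_decomp, rule re_im_cstar)
  have "y * cstar y + cstar y * y = 2 *\<^sub>R (r * r - t * t)"
    unfolding cy unfolding y by (simp add: algebra_simps scaleR_2)
  then show ?thesis by (simp add: r_def t_def imag_one_mult_mult)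
qed

lemma selfadjoint_as_diff_squares:
  fixes h :: "'a::cstar_algebra"
  assumes "selfadjoint h"
  defines "u \<equiv> 1 + (1/4::real) *\<^sub>R h" and "v \<equiv> 1 - (1/4::real) *\<^sub>R h"
  shows "h = cstar u * u - cstar v * v"
proof -
  have "cstar u * u - cstar v * v = (1 + (1/4::real) *\<^sub>R h) * (1 + (1/4::real) *\<^sub>R h)
      - (1 - (1/4::real) *\<^sub>R h) * (1 - (1/4::real) *\<^sub>R h)"
    using assms by (simp add: u_def v_def selfadjoint_def)
  also have "\<dots> = (1/4::real) *\<^sub>R h + (1/4::real) *\<^sub>R h + (1/4::real) *\<^sub>R h + (1/4::real) *\<^sub>R h"
    by (simp add: algebra_simps)
  also have "\<dots> = h" by (simp only: scaleR_add_left[symmetric]) simp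
  finally show ?thesis by simp
qed

section \<open>The binomial series of the square root\<close>

definition sqrt_coeff :: "nat \<Rightarrow> real" where
  "sqrt_coeff n = ((1/2::real) gchoose n) * (-1) ^ n"

lemma sqrt_coeff_0 [simp]: "sqrt_coeff 0 = 1"
  by (simp add: sqrt_coeff_def)

lemma sqrt_coeff_Suc: "sqrt_coeff (Suc n) = sqrt_coeff n * ((real n - 1/2) / real (Suc n))"
proof -
  have "(1/2::real) * ((1/2) gchoose n) = real n * ((1/2) gchoose n) + real (Suc n) * ((1/2) gchoose (Suc n))"
    by (rule gbinomial_mult_1)
  then have "real (Suc n) * ((1/2::real) gchoose (Suc n)) = (1/2 - real n) * ((1/2) gchoose n)"
    by (simp add: algebra_simps)
  then have g: "((1/2::real) gchoose (Suc n)) = (1/2 - real n) * ((1/2) gchoose n) / real (Suc n)"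
    by (simp add: eq_divide_eq mult.commute del: of_nat_Suc)
  have "sqrt_coeff (Suc n) = - ((-1) ^ n * ((1/2::real) gchoose (Suc n)))" by (simp add: sqrt_coeff_def)
  also have "\<dots> = - ((-1) ^ n * ((1/2 - real n) * ((1/2) gchoose n) / real (Suc n)))" by (simp only: g)
  also have "\<dots> = ((1/2::real) gchoose n) * (-1) ^ n * ((real n - 1/2) / real (Suc n))"
    by (simp only: times_divide_eq_left times_divide_eq_right minus_divide_left) (simp add: algebra_simps)
  finally show ?thesis by (simp only: sqrt_coeff_def)
qed

lemma sqrt_coeff_nonpos: "n \<ge> 1 \<Longrightarrow> sqrt_coeff n \<le> 0"
proof (induction n rule: dec_induct)
  case base
  then show ?case by (simp add: sqrt_coeff_def)
next
  case (step n)
  have "(real n - 1/2) / real (Suc n) \<ge> 0" using step(1) by simp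
  with step(3) show ?case by (simp only: sqrt_coeff_Suc mult_nonpos_nonneg)
qed

lemma sqrt_coeff_sums: "0 \<le> r \<Longrightarrow> r < 1 \<Longrightarrow> (\<lambda>n. sqrt_coeff n * r ^ n) sums sqrt (1 - r)"
  using sqrt_series[of "- r"] by (simp add: sqrt_coeff_def power_minus' mult.assoc)

text \<open>Abel's theorem in its simplest form: the partial sums are bounded by the value of
  the series at r < 1, and r tends to 1.\<close>

lemma sum_abs_sqrt_coeff_Suc_le: "(\<Sum>n<N. \<bar>sqrt_coeff (Suc n)\<bar>) \<le> 1"
proof -
  define f where "f r = (\<Sum>n<N. \<bar>sqrt_coeff (Suc n)\<bar> * r ^ Suc n)" for r :: real
  have le: "f r \<le> 1" if r: "0 \<le> r" "r < 1" for r
  proof -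
    have "(\<lambda>n. sqrt_coeff (Suc n) * r ^ Suc n) sums (sqrt (1 - r) - 1)"
      using sqrt_coeff_sums[OF r] by (subst sums_Suc_iff) simp
    then have s: "(\<lambda>n. - (sqrt_coeff (Suc n) * r ^ Suc n)) sums (1 - sqrt (1 - r))"
      using sums_minus by fastforce
    have nonneg: "0 \<le> - (sqrt_coeff (Suc n) * r ^ Suc n)" for n
      using sqrt_coeff_nonpos[of "Suc n"] r by (simp add: mult_nonpos_nonneg)
    have "f r = (\<Sum>n<N. - (sqrt_coeff (Suc n) * r ^ Suc n))"
      unfolding f_def using sqrt_coeff_nonpos[of "Suc _"] by (intro sum.cong) (auto simp: abs_of_nonpos)
    also have "\<dots> \<le> 1 - sqrt (1 - r)"
      using sum_le_suminf[OF sums_summable[OF s]] nonneg sums_unique[OF s] by fastforce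
    also have "\<dots> \<le> 1" using r by simp
    finally show ?thesis .
  qed
  define r where "r k = 1 - inverse (real (Suc k))" for k
  have "r \<longlonglongrightarrow> 1"
    unfolding r_def using tendsto_diff[OF tendsto_const LIMSEQ_inverse_real_of_nat] by simp
  then have "(\<lambda>k. f (r k)) \<longlonglongrightarrow> f 1"
    unfolding f_def by (intro tendsto_intros)
  moreover have "f (r k) \<le> 1" for k
    by (rule le) (auto simp: r_def field_simps)
  ultimately have "f 1 \<le> 1" by (intro LIMSEQ_le_const2) auto
  then show ?thesis by (simp add: f_def)
qed

lemma summable_abs_sqrt_coeff_Suc: "summable (\<lambda>n. \<bar>sqrt_coeff (Suc n)\<bar>)"
  by (rule summableI_nonneg_bounded[OF _ sum_abs_sqrt_coeff_Suc_le]) simp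

lemma summable_abs_sqrt_coeff: "summable (\<lambda>n. \<bar>sqrt_coeff n\<bar>)"
  using summable_abs_sqrt_coeff_Suc by (subst summable_Suc_iff[symmetric])

lemma suminf_abs_sqrt_coeff_Suc_le: "(\<Sum>n. \<bar>sqrt_coeff (Suc n)\<bar>) \<le> 1"
  by (rule suminf_le_const[OF summable_abs_sqrt_coeff_Suc sum_abs_sqrt_coeff_Suc_le])

lemma gbinomial_one_real: "(1::real) gchoose k = (if k = 0 then 1 else if k = 1 then 1 else 0)"
proof -
  have "(1::real) gchoose k = of_nat (1 choose k)" using binomial_gbinomial[of 1 k, where 'a=real] by simp
  moreover have "(1::nat) choose k = (if k = 0 then 1 else if k = 1 then 1 else 0)"
    by (cases k) (auto simp: binomial_eq_0)
  ultimately show ?thesis by simp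
qed

text \<open>The Cauchy square of the coefficient sequence is that of 1 - X (Vandermonde with 1/2 + 1/2 = 1).\<close>

lemma sqrt_coeff_convolution:
  "(\<Sum>i\<le>k. sqrt_coeff i * sqrt_coeff (k - i)) = (if k = 0 then 1 else if k = 1 then -1 else 0)"
proof -
  have "(\<Sum>i\<le>k. sqrt_coeff i * sqrt_coeff (k - i))
      = (\<Sum>i\<le>k. (-1)^k * (((1/2::real) gchoose i) * ((1/2) gchoose (k - i))))"
  proof (intro sum.cong refl)
    fix i assume "i \<in> {..k}"
    then have "(-1::real) ^ i * (-1) ^ (k - i) = (-1) ^ k" by (simp add: power_add[symmetric])
    moreover have "sqrt_coeff i * sqrt_coeff (k - i)
        = (((1/2::real) gchoose i) * ((1/2) gchoose (k - i))) * ((-1::real) ^ i * (-1) ^ (k - i))"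
      unfolding sqrt_coeff_def by (simp only: ac_simps)
    ultimately show "sqrt_coeff i * sqrt_coeff (k - i) = (-1) ^ k * (((1/2::real) gchoose i) * ((1/2) gchoose (k - i)))"
      by (simp only: mult.commute)
  qed
  also have "\<dots> = (-1)^k * (\<Sum>i\<le>k. ((1/2::real) gchoose i) * ((1/2) gchoose (k - i)))"
    by (simp only: sum_distrib_left)
  also have "(\<Sum>i\<le>k. ((1/2::real) gchoose i) * ((1/2) gchoose (k - i))) = (1/2 + 1/2) gchoose k"
    using gbinomial_Vandermonde[of "1/2::real" "1/2" k] by (simp only: atMost_atLeast0)
  finally show ?thesis by (simp add: gbinomial_one_real)
qed

definition sqrt_one_minus :: "'a::cstar_algebra \<Rightarrow> 'a" where
  "sqrt_one_minus u = (\<Sum>n. sqrt_coeff n *\<^sub>R u ^ n)"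

lemma norm_sqrt_coeff_power_le:
  "norm (u::'a::cstar_algebra) \<le> 1 \<Longrightarrow> norm (sqrt_coeff n *\<^sub>R u ^ n) \<le> \<bar>sqrt_coeff n\<bar>"
  using norm_power_ineq[of u n] power_le_one[of "norm u" n] by (simp add: mult_left_le)

lemma summable_norm_sqrt_one_minus:
  "norm (u::'a::cstar_algebra) \<le> 1 \<Longrightarrow> summable (\<lambda>n. norm (sqrt_coeff n *\<^sub>R u ^ n))"
  by (rule summable_comparison_test[OF _ summable_abs_sqrt_coeff]) (use norm_sqrt_coeff_power_le in auto)

lemma summable_sqrt_one_minus:
  "norm (u::'a::cstar_algebra) \<le> 1 \<Longrightarrow> summable (\<lambda>n. sqrt_coeff n *\<^sub>R u ^ n)"
  by (rule summable_norm_cancel[OF summable_norm_sqrt_one_minus])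

lemma sqrt_one_minus_square:
  assumes "norm (u::'a::cstar_algebra) \<le> 1"
  shows "sqrt_one_minus u * sqrt_one_minus u = 1 - u"
proof -
  let ?c = "\<lambda>k. \<Sum>i\<le>k. (sqrt_coeff i *\<^sub>R u ^ i) * (sqrt_coeff (k - i) *\<^sub>R u ^ (k - i))"
  have cauchy: "?c sums (sqrt_one_minus u * sqrt_one_minus u)"
    unfolding sqrt_one_minus_def
    by (rule Cauchy_product_sums[OF summable_norm_sqrt_one_minus[OF assms] summable_norm_sqrt_one_minus[OF assms]])
  have "?c k = (\<Sum>i\<le>k. (sqrt_coeff i * sqrt_coeff (k - i)) *\<^sub>R u ^ k)" for k
  proof (intro sum.cong refl)
    fix i assume "i \<in> {..k}"
    then have "u ^ i * u ^ (k - i) = u ^ k" by (simp add: power_add[symmetric])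
    then show "(sqrt_coeff i *\<^sub>R u ^ i) * (sqrt_coeff (k - i) *\<^sub>R u ^ (k - i))
        = (sqrt_coeff i * sqrt_coeff (k - i)) *\<^sub>R u ^ k"
      by simp
  qed
  then have "?c k = (if k = 0 then 1 else 0) + (if k = 1 then - u else 0)" for k
    by (simp add: scaleR_sum_left[symmetric] sqrt_coeff_convolution)
  moreover have "(\<lambda>k. (if k = 0 then 1 else 0) + (if k = 1 then - u else 0)) sums (1 + - u)"
    by (intro sums_add) (use sums_single[of 0 "\<lambda>_. (1::'a)"] sums_single[of 1 "\<lambda>_. - u"] in simp_all)
  ultimately have "?c sums (1 - u)" by simp
  with cauchy show ?thesis using sums_unique2 by blast
qed

lemma sqrt_one_minus_commute:
  assumes "norm (u::'a::cstar_algebra) \<le> 1" "z * u = u * z"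
  shows "z * sqrt_one_minus u = sqrt_one_minus u * z"
proof -
  have "z * sqrt_one_minus u = (\<Sum>n. z * (sqrt_coeff n *\<^sub>R u ^ n))"
    unfolding sqrt_one_minus_def by (rule suminf_mult[OF summable_sqrt_one_minus[OF assms(1)], symmetric])
  also have "\<dots> = (\<Sum>n. (sqrt_coeff n *\<^sub>R u ^ n) * z)"
    using power_commuting_commutes[OF assms(2)[symmetric]] by simp
  also have "\<dots> = sqrt_one_minus u * z"
    unfolding sqrt_one_minus_def by (rule suminf_mult2[OF summable_sqrt_one_minus[OF assms(1)], symmetric])
  finally show ?thesis .
qed

lemma selfadjoint_sqrt_one_minus:
  assumes "norm (u::'a::cstar_algebra) \<le> 1" "selfadjoint u"
  shows "selfadjoint (sqrt_one_minus u)"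
proof -
  have "cstar (sqrt_one_minus u) = (\<Sum>n. cstar (sqrt_coeff n *\<^sub>R u ^ n))"
    unfolding sqrt_one_minus_def by (rule cstar_suminf[OF summable_sqrt_one_minus[OF assms(1)]])
  also have "\<dots> = sqrt_one_minus u" using assms(2) by (simp add: selfadjoint_def sqrt_one_minus_def)
  finally show ?thesis by (simp add: selfadjoint_def)
qed

lemma norm_one_minus_sqrt_one_minus_le:
  assumes "norm (u::'a::cstar_algebra) \<le> 1"
  shows "norm (1 - sqrt_one_minus u) \<le> 1"
proof -
  have summable_tail: "summable (\<lambda>n. norm (sqrt_coeff (Suc n) *\<^sub>R u ^ Suc n))"
    using summable_norm_sqrt_one_minus[OF assms] by (subst summable_Suc_iff)
  have "1 - sqrt_one_minus u = - (\<Sum>n. sqrt_coeff (Suc n) *\<^sub>R u ^ Suc n)"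
    unfolding sqrt_one_minus_def using suminf_split_head[OF summable_sqrt_one_minus[OF assms]] by simp
  then have "norm (1 - sqrt_one_minus u) = norm (\<Sum>n. sqrt_coeff (Suc n) *\<^sub>R u ^ Suc n)" by simp
  also have "\<dots> \<le> (\<Sum>n. norm (sqrt_coeff (Suc n) *\<^sub>R u ^ Suc n))" by (rule summable_norm[OF summable_tail])
  also have "\<dots> \<le> (\<Sum>n. \<bar>sqrt_coeff (Suc n)\<bar>)"
    by (rule suminf_le[OF _ summable_tail summable_abs_sqrt_coeff_Suc]) (rule norm_sqrt_coeff_power_le[OF assms])
  also have "\<dots> \<le> 1" by (rule suminf_abs_sqrt_coeff_Suc_le)
  finally show ?thesis .
qed

section \<open>Invertible elements\<close>

definition invertible_el :: "'a::cstar_algebra \<Rightarrow> bool" where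
  "invertible_el a \<longleftrightarrow> (\<exists>b. a * b = 1 \<and> b * a = 1)"

lemma invertible_el_one_minus:
  assumes "norm (u::'a::cstar_algebra) < 1" shows "invertible_el (1 - u)"
proof -
  have "summable (\<lambda>n. norm u ^ n)" using assms by (simp add: summable_geometric)
  then have s: "summable (\<lambda>n. u ^ n)"
    by (rule summable_comparison_test[rotated]) (auto intro: norm_power_ineq)
  define S where "S = (\<Sum>n. u ^ n)"
  have tail: "(\<Sum>n. u ^ Suc n) = S - 1" unfolding S_def using suminf_split_head[OF s] by simp
  have "u * S = (\<Sum>n. u * u ^ n)" unfolding S_def by (rule suminf_mult[OF s, symmetric])
  then have "(1 - u) * S = 1" using tail by (simp add: algebra_simps)
  moreover have "S * u = (\<Sum>n. u ^ n * u)" unfolding S_def by (rule suminf_mult2[OF s])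
  then have "S * (1 - u) = 1" using tail by (simp add: algebra_simps power_commutes)
  ultimately show ?thesis unfolding invertible_el_def by blast
qed

lemma invertible_el_mult: "invertible_el a \<Longrightarrow> invertible_el b \<Longrightarrow> invertible_el (a * b)"
proof -
  assume "invertible_el a" "invertible_el b"
  then obtain a' b' where "a * a' = 1" "a' * a = 1" "b * b' = 1" "b' * b = 1"
    unfolding invertible_el_def by blast
  then have "(a * b) * (b' * a') = 1" "(b' * a') * (a * b) = 1"
    by (simp_all add: mult.assoc) (metis mult.assoc mult_1_left)+
  then show ?thesis unfolding invertible_el_def by blast
qed

lemma invertible_el_commuting_factor:
  assumes "invertible_el (a * b)" "a * b = b * a" shows "invertible_el a"
proof -
  obtain g where g: "(a * b) * g = 1" "g * (a * b) = 1" using assms(1) unfolding invertible_el_def by blast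
  have right: "a * (b * g) = 1" using g(1) by (simp add: mult.assoc)
  have left: "(g * b) * a = 1" using g(2) assms(2) by (simp add: mult.assoc)
  have "b * g = g * b" using right left by (metis mult.assoc mult_1_left mult_1_right)
  then show ?thesis unfolding invertible_el_def using right left by metis
qed

lemma invertible_el_scaleR: "invertible_el a \<Longrightarrow> c \<noteq> 0 \<Longrightarrow> invertible_el (c *\<^sub>R a)"
  unfolding invertible_el_def
  by (metis (no_types, lifting) mult_scaleR_left mult_scaleR_right right_inverse scaleR_one scaleR_scaleR)

lemma invertible_el_scaleR_iff: "c \<noteq> 0 \<Longrightarrow> invertible_el (c *\<^sub>R a) \<longleftrightarrow> invertible_el a"
  using invertible_el_scaleR[of a c] invertible_el_scaleR[of "c *\<^sub>R a" "inverse c"] by auto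

text \<open>Jacobson's lemma: if g inverts 1 - x y then 1 + y g x inverts 1 - y x.\<close>

lemma invertible_el_one_minus_swap:
  assumes "invertible_el (1 - x * y)" shows "invertible_el (1 - y * (x::'a::cstar_algebra))"
proof -
  obtain g where g: "(1 - x * y) * g = 1" "g * (1 - x * y) = 1" using assms unfolding invertible_el_def by blast
  have g1: "g - x * y * g = 1" using g(1) by (simp add: algebra_simps)
  have g2: "g - g * x * y = 1" using g(2) by (simp add: algebra_simps mult.assoc)
  have "(1 - y * x) * (1 + y * g * x) = 1 - y * x + y * (g - x * y * g) * x"
    by (simp add: algebra_simps mult.assoc)
  also have "\<dots> = 1" using g1 by (simp add: mult.assoc)
  finally have right: "(1 - y * x) * (1 + y * g * x) = 1" .
  have "(1 + y * g * x) * (1 - y * x) = 1 - y * x + y * (g - g * x * y) * x"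
    by (simp add: algebra_simps mult.assoc)
  also have "\<dots> = 1" using g2 by (simp add: mult.assoc)
  finally have left: "(1 + y * g * x) * (1 - y * x) = 1" .
  show ?thesis unfolding invertible_el_def using right left by blast
qed

lemma selfadjoint_inverse:
  assumes "selfadjoint a" "a * b = 1" "b * a = 1" shows "selfadjoint (b::'a::cstar_algebra)"
proof -
  have "cstar b * a = 1" using assms(1,2) cstar_mult[of a b] by (simp add: selfadjoint_def)
  then show ?thesis unfolding selfadjoint_def by (metis assms(2) mult.assoc mult_1_left mult_1_right)
qed

section \<open>Positive elements\<close>

text \<open>For self-adjoint a the condition on t expresses that the spectrum of a lies in [0, 2t].\<close>

definition spec_positive :: "'a::cstar_algebra \<Rightarrow> bool" where
  "spec_positive a \<longleftrightarrow> selfadjoint a \<and> (\<exists>t\<ge>0. norm (t *\<^sub>R 1 - a) \<le> t)"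

lemma spec_positive_selfadjoint: "spec_positive a \<Longrightarrow> selfadjoint a"
  by (simp add: spec_positive_def)

lemma spec_positive_0 [simp]: "spec_positive 0"
  unfolding spec_positive_def selfadjoint_def by auto

lemma spec_positive_add:
  assumes "spec_positive a" "spec_positive b" shows "spec_positive (a + b)"
proof -
  obtain s t where st: "s \<ge> 0" "norm (s *\<^sub>R 1 - a) \<le> s" "t \<ge> 0" "norm (t *\<^sub>R 1 - b) \<le> t"
    using assms unfolding spec_positive_def by blast
  have "norm ((s + t) *\<^sub>R 1 - (a + b)) = norm ((s *\<^sub>R 1 - a) + (t *\<^sub>R 1 - b))"
    by (simp add: algebra_simps)
  also have "\<dots> \<le> s + t" using st by (meson add_mono norm_triangle_le)
  finally show ?thesis
    using assms st unfolding spec_positive_def by (auto intro!: selfadjoint_add exI[of _ "s + t"])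
qed

lemma spec_positive_scaleR:
  assumes "spec_positive a" "c \<ge> 0" shows "spec_positive (c *\<^sub>R a)"
proof -
  obtain s where s: "s \<ge> 0" "norm (s *\<^sub>R 1 - a) \<le> s" using assms unfolding spec_positive_def by blast
  have "(c * s) *\<^sub>R 1 - c *\<^sub>R a = c *\<^sub>R (s *\<^sub>R 1 - a)" by (simp add: algebra_simps)
  then have "norm ((c * s) *\<^sub>R 1 - c *\<^sub>R a) = c * norm (s *\<^sub>R 1 - a)"
    using assms(2) by simp
  also have "\<dots> \<le> c * s" using s assms(2) by (simp add: mult_left_mono)
  finally show ?thesis
    using assms s unfolding spec_positive_def by (auto intro!: selfadjoint_scaleR exI[of _ "c * s"])
qed

lemma spec_positive_bound_diff:
  assumes "selfadjoint h" "norm h \<le> l" shows "spec_positive (l *\<^sub>R 1 - h)"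
  unfolding spec_positive_def using assms
  by (auto intro!: exI[of _ l] selfadjoint_diff selfadjoint_scaleR dest: order_trans[OF norm_ge_zero])

lemma spec_positive_bound_add:
  assumes "selfadjoint h" "norm h \<le> l" shows "spec_positive (l *\<^sub>R 1 + h)"
  using spec_positive_bound_diff[of "- h" l] assms by (simp add: selfadjoint_minus)

text \<open>Rescaling h to u = 1 - h/t with \<parallel>u\<parallel> \<le> 1 and using the series of \<surd>(1 - u).\<close>

lemma spec_positive_sqrt:
  assumes "spec_positive h"
  obtains s where "selfadjoint s" "s * s = h" "spec_positive s"
    "\<And>z. z * h = h * z \<Longrightarrow> z * s = s * z"
proof -
  obtain t where t: "t \<ge> 0" "norm (t *\<^sub>R 1 - h) \<le> t" using assms unfolding spec_positive_def by blast
  show ?thesis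
  proof (cases "t = 0")
    case True
    then have "h = 0" using t by simp
    then show ?thesis using that[of 0] by (simp add: selfadjoint_def)
  next
    case False
    then have t_pos: "t > 0" using t by simp
    define u where "u = (1/t) *\<^sub>R (t *\<^sub>R 1 - h)"
    have norm_u: "norm u \<le> 1" using t t_pos by (simp add: u_def divide_le_eq_1)
    have sa_u: "selfadjoint u" using spec_positive_selfadjoint[OF assms] by (simp add: u_def selfadjoint_def)
    define s where "s = sqrt t *\<^sub>R sqrt_one_minus u"
    have "s * s = t *\<^sub>R (1 - u)" using t by (simp add: s_def sqrt_one_minus_square[OF norm_u])
    also have "\<dots> = h" using t_pos by (simp add: u_def algebra_simps)
    finally have ss: "s * s = h" .
    have "norm (sqrt t *\<^sub>R 1 - s) = sqrt t * norm (1 - sqrt_one_minus u)"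
      using t(1) by (simp add: s_def flip: scaleR_diff_right)
    also have "\<dots> \<le> sqrt t"
      using norm_one_minus_sqrt_one_minus_le[OF norm_u] t(1) by (simp add: mult_left_le)
    finally have "spec_positive s"
      using selfadjoint_sqrt_one_minus[OF norm_u sa_u] t(1) unfolding spec_positive_def s_def
      by (auto intro!: selfadjoint_scaleR exI[of _ "sqrt t"])
    moreover have "z * s = s * z" if "z * h = h * z" for z
    proof -
      have "z * u = u * z" using that by (simp add: u_def algebra_simps)
      then show ?thesis using sqrt_one_minus_commute[OF norm_u] by (simp add: s_def)
    qed
    ultimately show ?thesis
      using that[of s] selfadjoint_sqrt_one_minus[OF norm_u sa_u] ss by (simp add: s_def selfadjoint_scaleR)
  qed
qed

text \<open>The element z = s + i t satisfies z* z = s s + t t and s = (z + z*)/2.\<close>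

lemma norm_square_le_add_squares:
  assumes "selfadjoint s" "selfadjoint t" "s * t = t * s"
  shows "norm s ^ 2 \<le> norm (s * s + t * t :: 'a::cstar_algebra)"
proof -
  define w where "w = imag_one * t"
  define z where "z = s + w"
  have cz: "cstar z = s - w"
    using assms(1,2) by (simp add: z_def w_def selfadjoint_def cstar_imag_one imag_one_commute)
  have "s * w = w * s" using assms(3) unfolding w_def by (metis imag_one_commute mult.assoc)
  moreover have "w * w = - (t * t)" unfolding w_def by (rule imag_one_mult_mult)
  ultimately have "cstar z * z = s * s + t * t"
    unfolding cz unfolding z_def by (simp add: algebra_simps)
  then have nz: "norm z ^ 2 = norm (s * s + t * t)"
    using norm_cstar_mult_self[of z] by simp
  have "z + cstar z = 2 *\<^sub>R s" unfolding cz unfolding z_def by (simp add: scaleR_2)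
  then have "s = (1/2::real) *\<^sub>R (z + cstar z)" by simp
  then have "norm s \<le> (1/2) * (norm z + norm (cstar z))"
    using norm_triangle_ineq[of z "cstar z"] by simp
  then have "norm s ^ 2 \<le> norm z ^ 2" by (simp add: power_mono)
  then show ?thesis using nz by simp
qed

text \<open>For s1 = s/\<parallel>s\<parallel> and w = \<surd>(1 - s1 s1), the previous inequality gives
  \<parallel>1 - s1 s1\<parallel> = \<parallel>w\<parallel>^2 \<le> \<parallel>w w + s1 s1\<parallel> = 1.\<close>

lemma spec_positive_square:
  assumes "selfadjoint s" shows "spec_positive (s * (s::'a::cstar_algebra))"
proof (cases "s = 0")
  case False
  define r where "r = norm s"
  have r_pos: "r > 0" using False by (simp add: r_def)
  define s1 where "s1 = (1/r) *\<^sub>R s"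
  have sa1: "selfadjoint s1" using assms by (simp add: s1_def selfadjoint_scaleR)
  have "norm s1 = 1" using r_pos by (simp add: s1_def r_def)
  then have n11: "norm (s1 * s1) = 1" using selfadjoint_norm_square[OF sa1] by simp
  define w where "w = sqrt_one_minus (s1 * s1)"
  have n11_le: "norm (s1 * s1) \<le> 1" using n11 by simp
  have ww: "w * w = 1 - s1 * s1" unfolding w_def by (rule sqrt_one_minus_square[OF n11_le])
  have sa_w: "selfadjoint w" unfolding w_def by (rule selfadjoint_sqrt_one_minus[OF n11_le selfadjoint_mult_self[OF sa1]])
  have "s1 * w = w * s1" unfolding w_def by (rule sqrt_one_minus_commute[OF n11_le]) (simp add: mult.assoc)
  then have "norm w ^ 2 \<le> norm (w * w + s1 * s1)" by (intro norm_square_le_add_squares sa_w sa1) simp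
  also have "\<dots> = 1" using ww by simp
  finally have bound: "norm (1 - s1 * s1) \<le> 1" using selfadjoint_norm_square[OF sa_w] ww by simp
  have ss: "s * s = (r * r) *\<^sub>R (s1 * s1)" using r_pos by (simp add: s1_def)
  have "norm ((r * r) *\<^sub>R 1 - s * s) = (r * r) * norm (1 - s1 * s1)"
    unfolding ss using r_pos by (simp flip: scaleR_diff_right)
  also have "\<dots> \<le> r * r" using bound by (simp add: mult_left_le)
  finally show ?thesis unfolding spec_positive_def
    using r_pos by (auto intro!: selfadjoint_mult_self assms exI[of _ "r * r"])
qed simp

lemma spec_positive_mult_commuting:
  assumes "spec_positive a" "spec_positive b" "a * b = b * a" shows "spec_positive (a * b)"
proof -
  obtain s where s: "selfadjoint s" "s * s = a" "\<And>z. z * a = a * z \<Longrightarrow> z * s = s * z"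
    using spec_positive_sqrt[OF assms(1)] by blast
  obtain t where t: "selfadjoint t" "t * t = b" "\<And>z. z * b = b * z \<Longrightarrow> z * t = t * z"
    using spec_positive_sqrt[OF assms(2)] by blast
  have "b * s = s * b" using s(3) assms(3) by metis
  then have st: "s * t = t * s" using t(3) by metis
  have "a * b = (s * t) * (s * t)" by (metis mult.assoc s(2) st t(2))
  then show ?thesis using spec_positive_square[OF selfadjoint_mult_commuting[OF s(1) t(1) st]] by simp
qed

text \<open>Apply the previous inequality to the commuting square roots of a and l - a.\<close>

lemma spec_positive_norm_le:
  assumes "spec_positive a" "spec_positive (l *\<^sub>R 1 - a)" shows "norm a \<le> \<bar>l\<bar>"
proof -
  obtain s where s: "selfadjoint s" "s * s = a" "\<And>z. z * a = a * z \<Longrightarrow> z * s = s * z"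
    using spec_positive_sqrt[OF assms(1)] by blast
  obtain t where t: "selfadjoint t" "t * t = l *\<^sub>R 1 - a"
    "\<And>z. z * (l *\<^sub>R 1 - a) = (l *\<^sub>R 1 - a) * z \<Longrightarrow> z * t = t * z"
    using spec_positive_sqrt[OF assms(2)] by blast
  have "s * a = a * s" using s(2) by (metis mult.assoc)
  then have "s * (l *\<^sub>R 1 - a) = (l *\<^sub>R 1 - a) * s" by (simp add: algebra_simps)
  then have "s * t = t * s" using t(3) by metis
  then have "norm s ^ 2 \<le> norm (s * s + t * t)" by (rule norm_square_le_add_squares[OF s(1) t(1)])
  also have "\<dots> = \<bar>l\<bar>" using s(2) t(2) by simp
  finally show ?thesis using selfadjoint_norm_square[OF s(1)] s(2) by simp
qed

lemma spec_positive_antisym: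
  assumes "spec_positive a" "spec_positive (- a)" shows "a = (0::'a::cstar_algebra)"
  using spec_positive_norm_le[of a 0] assms by simp

lemma norm_le_if_spec_positive_bounds:
  assumes "selfadjoint k" "l \<ge> 0" "spec_positive (l *\<^sub>R 1 - k)" "spec_positive (l *\<^sub>R 1 + k)"
  shows "norm k \<le> l"
proof -
  have "(l *\<^sub>R 1 - k) * (l *\<^sub>R 1 + k) = (l *\<^sub>R 1 + k) * (l *\<^sub>R 1 - k)" by (simp add: algebra_simps)
  then have "spec_positive ((l *\<^sub>R 1 - k) * (l *\<^sub>R 1 + k))"
    by (rule spec_positive_mult_commuting[OF assms(3,4)])
  moreover have "(l *\<^sub>R 1 - k) * (l *\<^sub>R 1 + k) = (l * l) *\<^sub>R 1 - k * k" by (simp add: algebra_simps)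
  ultimately have "norm (k * k) \<le> \<bar>l * l\<bar>"
    using spec_positive_norm_le[OF spec_positive_square[OF assms(1)]] by metis
  then have "norm k ^ 2 \<le> l ^ 2" using selfadjoint_norm_square[OF assms(1)] by (simp add: power2_eq_square)
  then show ?thesis using assms(2) by (simp add: power2_le_iff_abs_le)
qed

section \<open>Every b* b is positive\<close>

lemma spec_positive_invertible_add:
  assumes "spec_positive h" "e > 0" shows "invertible_el (h + e *\<^sub>R 1)"
proof -
  obtain t where t: "t \<ge> 0" "norm (t *\<^sub>R 1 - h) \<le> t" using assms unfolding spec_positive_def by blast
  define u where "u = (1 / (t + e)) *\<^sub>R (t *\<^sub>R 1 - h)"
  have "norm u = norm (t *\<^sub>R 1 - h) / (t + e)" using t assms(2) by (simp add: u_def)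
  also have "\<dots> < 1" using t assms(2) by (simp add: divide_less_eq)
  finally have "invertible_el ((t + e) *\<^sub>R (1 - u))"
    using t assms(2) by (intro invertible_el_scaleR invertible_el_one_minus) auto
  moreover have "(t + e) *\<^sub>R (1 - u) = (t + e) *\<^sub>R 1 - (t *\<^sub>R 1 - h)"
    using t assms(2) by (simp add: u_def scaleR_diff_right)
  moreover have "(t + e) *\<^sub>R 1 - (t *\<^sub>R 1 - h) = h + e *\<^sub>R 1" by (simp add: algebra_simps)
  ultimately show ?thesis by simp
qed

text \<open>If \<parallel>k\<parallel> = 1 and g inverted 1 - k k, then (\<parallel>g\<parallel> + 1 - g)(1 - k k) \<ge> 0 would give
  \<parallel>k k\<parallel> \<le> 1 - 1/(\<parallel>g\<parallel> + 1) < 1.\<close>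

lemma not_invertible_one_minus_square:
  assumes "selfadjoint k" "norm k = 1"
  shows "\<not> invertible_el (1 - k * (k::'a::cstar_algebra))"
proof
  assume "invertible_el (1 - k * k)"
  define c where "c = 1 - k * k"
  obtain g where g: "c * g = 1" "g * c = 1"
    using \<open>invertible_el (1 - k * k)\<close> unfolding invertible_el_def c_def by blast
  have nkk: "norm (k * k) = 1" using selfadjoint_norm_square[OF assms(1)] assms(2) by simp
  then have "c = sqrt_one_minus (k * k) * sqrt_one_minus (k * k)"
    unfolding c_def by (simp add: sqrt_one_minus_square)
  then have pos_c: "spec_positive c"
    using spec_positive_square selfadjoint_sqrt_one_minus[of "k * k"] nkk
      selfadjoint_mult_self[OF assms(1)] by simp
  define M where "M = norm g + 1"
  have M1: "M \<ge> 1" by (simp add: M_def)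
  have "selfadjoint g"
    using selfadjoint_inverse[OF _ g] assms(1) by (simp add: c_def selfadjoint_def)
  then have "spec_positive (M *\<^sub>R 1 - g)" by (rule spec_positive_bound_diff) (simp add: M_def)
  moreover have "(M *\<^sub>R 1 - g) * c = c * (M *\<^sub>R 1 - g)" using g by (simp add: algebra_simps)
  ultimately have "spec_positive ((1/M) *\<^sub>R ((M *\<^sub>R 1 - g) * c))"
    using M1 by (intro spec_positive_scaleR spec_positive_mult_commuting pos_c) simp_all
  moreover have "(1/M) *\<^sub>R ((M *\<^sub>R 1 - g) * c) = (1 - 1/M) *\<^sub>R 1 - k * k"
  proof -
    have "(M *\<^sub>R 1 - g) * c = M *\<^sub>R c - 1" using g(2) by (simp add: algebra_simps)
    then show ?thesis using M1 by (simp add: c_def scaleR_diff_right scaleR_diff_left)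
  qed
  ultimately have "norm (k * k) \<le> \<bar>1 - 1/M\<bar>"
    using spec_positive_norm_le[OF spec_positive_square[OF assms(1)]] by metis
  also have "\<dots> < 1" using M1 by auto
  finally show False using nkk by simp
qed

text \<open>Conversely, if \<parallel>\<parallel>h\<parallel> - h\<parallel> = r > \<parallel>h\<parallel>, then with k = (\<parallel>h\<parallel> - h)/r the element 1 - k k is a
  multiple of (h + (r - \<parallel>h\<parallel>))((r + \<parallel>h\<parallel>) - h), a product of invertible elements.\<close>

lemma spec_positive_if_invertible_add:
  assumes "selfadjoint h" "\<And>e. e > 0 \<Longrightarrow> invertible_el (h + e *\<^sub>R 1)"
  shows "spec_positive (h::'a::cstar_algebra)"
proof -
  define n k where "n = norm h" and "k = n *\<^sub>R 1 - h"
  define r where "r = norm k"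
  have "r \<le> n"
  proof (rule ccontr)
    assume "\<not> r \<le> n"
    then have rn: "r > n" by simp
    have n0: "n \<ge> 0" by (simp add: n_def)
    define k1 where "k1 = (1/r) *\<^sub>R k"
    have sa_k1: "selfadjoint k1" using assms(1) by (simp add: k1_def k_def selfadjoint_def)
    have "k \<noteq> 0" using rn n0 by (auto simp: r_def)
    then have norm_k1: "norm k1 = 1" by (simp add: k1_def r_def)
    have "norm ((1 / (r + n)) *\<^sub>R h) < 1" using rn n0 by (simp add: n_def[symmetric] divide_less_eq)
    then have "invertible_el ((r + n) *\<^sub>R (1 - (1 / (r + n)) *\<^sub>R h))"
      using rn n0 by (intro invertible_el_scaleR invertible_el_one_minus) auto
    moreover have "(r + n) *\<^sub>R (1 - (1 / (r + n)) *\<^sub>R h) = (r + n) *\<^sub>R 1 - h"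
      using rn n0 by (simp add: algebra_simps)
    ultimately have "invertible_el ((h + (r - n) *\<^sub>R 1) * ((r + n) *\<^sub>R 1 - h))"
      using assms(2) rn by (intro invertible_el_mult) auto
    then have "invertible_el ((1/(r*r)) *\<^sub>R ((h + (r - n) *\<^sub>R 1) * ((r + n) *\<^sub>R 1 - h)))"
      using rn n0 by (intro invertible_el_scaleR) auto
    moreover have "(h + (r - n) *\<^sub>R 1) * ((r + n) *\<^sub>R 1 - h) = (r * r) *\<^sub>R 1 - k * k"
      by (simp add: k_def algebra_simps)
    moreover have "(1/(r*r)) *\<^sub>R ((r * r) *\<^sub>R 1 - k * k) = 1 - k1 * k1"
      using rn n0 by (simp add: k1_def scaleR_diff_right)
    ultimately show False using not_invertible_one_minus_square[OF sa_k1 norm_k1] by simp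
  qed
  then show ?thesis
    unfolding spec_positive_def using assms(1) by (auto intro!: exI[of _ n] simp: r_def k_def n_def)
qed

text \<open>With m = |a| = \<surd>(a a), the element (m - a)/2 is the negative part of a; h + \<epsilon> is
  invertible for it since (m + 2\<epsilon> - a)(m + 2\<epsilon> + a) = 4\<epsilon>(m + \<epsilon>).\<close>

lemma spec_positive_negative_part:
  assumes "selfadjoint a" "spec_positive m" "m * m = a * a" "a * m = m * a"
  shows "spec_positive ((1/2::real) *\<^sub>R (m - a))"
proof (rule spec_positive_if_invertible_add)
  show "selfadjoint ((1/2::real) *\<^sub>R (m - a))"
    using assms(1) spec_positive_selfadjoint[OF assms(2)] by (intro selfadjoint_scaleR selfadjoint_diff)
next
  fix e :: real assume e: "e > 0"
  define X where "X = m + (2 * e) *\<^sub>R 1"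
  have Xa: "X * a = a * X" using assms(4) by (simp add: X_def algebra_simps)
  have "(X - a) * (X + a) = X * X - a * a" using Xa by (simp add: algebra_simps)
  also have "\<dots> = (4 * e) *\<^sub>R (m + e *\<^sub>R 1)"
  proof -
    have "(e * 2) *\<^sub>R m + (e * 2) *\<^sub>R m = (e * 4) *\<^sub>R m"
      by (simp only: scaleR_add_left[symmetric]) simp
    then show ?thesis using assms(3) by (simp add: X_def algebra_simps)
  qed
  finally have "invertible_el ((X - a) * (X + a))"
    using spec_positive_invertible_add[OF assms(2) e] e by (simp add: invertible_el_scaleR)
  moreover have "(X - a) * (X + a) = (X + a) * (X - a)" using Xa by (simp add: algebra_simps)
  ultimately have "invertible_el (X - a)" by (rule invertible_el_commuting_factor)
  then have "invertible_el ((1/2::real) *\<^sub>R (X - a))" by (rule invertible_el_scaleR) simp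
  moreover have "(1/2::real) *\<^sub>R (X - a) = (1/2::real) *\<^sub>R (m - a) + e *\<^sub>R 1"
    by (simp add: X_def algebra_simps)
  ultimately show "invertible_el ((1/2::real) *\<^sub>R (m - a) + e *\<^sub>R 1)" by simp
qed

text \<open>y y* + y* y = 2(Re(y)^2 + Im(y)^2) makes y y* positive, and y y* + \<epsilon> is invertible iff
  y* y + \<epsilon> is (Jacobson).\<close>

lemma cstar_mult_eq_zero_if_negative:
  assumes "spec_positive (- (cstar y * y))" shows "cstar y * y = (0::'a::cstar_algebra)"
proof -
  have "y * cstar y = 2 *\<^sub>R (re_part y * re_part y + im_part y * im_part y) + - (cstar y * y)"
    using mult_cstar_add_cstar_mult[of y] by (simp add: algebra_simps)
  also have "spec_positive \<dots>"
    by (intro spec_positive_add spec_positive_scaleR spec_positive_square assms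
        selfadjoint_re_part selfadjoint_im_part) simp
  finally have pos_yy: "spec_positive (y * cstar y)" .
  have "spec_positive (cstar y * y)"
  proof (rule spec_positive_if_invertible_add[OF selfadjoint_cstar_mult])
    fix e :: real assume e: "e > 0"
    have "y * cstar y + e *\<^sub>R 1 = e *\<^sub>R (1 - ((-1/e) *\<^sub>R y) * cstar y)"
      using e by (simp add: algebra_simps)
    then have "invertible_el (e *\<^sub>R (1 - ((-1/e) *\<^sub>R y) * cstar y))"
      using spec_positive_invertible_add[OF pos_yy e] by simp
    then have "invertible_el (1 - ((-1/e) *\<^sub>R y) * cstar y)"
      using invertible_el_scaleR_iff[of e] e by blast
    then have "invertible_el (1 - cstar y * ((-1/e) *\<^sub>R y))" by (rule invertible_el_one_minus_swap)
    then have "invertible_el (e *\<^sub>R (1 - cstar y * ((-1/e) *\<^sub>R y)))"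
      using e by (intro invertible_el_scaleR) auto
    moreover have "e *\<^sub>R (1 - cstar y * ((-1/e) *\<^sub>R y)) = cstar y * y + e *\<^sub>R 1"
      using e by (simp add: algebra_simps)
    ultimately show "invertible_el (cstar y * y + e *\<^sub>R 1)" by simp
  qed
  then show ?thesis using spec_positive_antisym assms by blast
qed

text \<open>Write b* b = a = p - q with q = (|a| - a)/2 \<ge> 0 and p q = 0. Then (b q)* (b q) = q a q = -q^3
  is negative, hence zero, so q = 0 and a = |a|.\<close>

lemma spec_positive_cstar_mult: "spec_positive (cstar b * (b::'a::cstar_algebra))"
proof -
  define a where "a = cstar b * b"
  have sa_a: "selfadjoint a" by (simp add: a_def selfadjoint_cstar_mult)
  obtain m where m: "m * m = a * a" "spec_positive m" "\<And>z. z * (a * a) = (a * a) * z \<Longrightarrow> z * m = m * z"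
    using spec_positive_sqrt[OF spec_positive_square[OF sa_a]] by metis
  have am: "a * m = m * a" using m(3) by (simp add: mult.assoc)
  define p q where "p = (1/2::real) *\<^sub>R (m + a)" and "q = (1/2::real) *\<^sub>R (m - a)"
  have pos_q: "spec_positive q" unfolding q_def by (rule spec_positive_negative_part[OF sa_a m(2,1) am])
  have sa_q: "selfadjoint q" by (rule spec_positive_selfadjoint[OF pos_q])
  have qp: "q * p = 0" using m(1) am by (simp add: p_def q_def algebra_simps)
  have a_pq: "a = p - q" and m_pq: "m = p + q"
    by (simp_all add: p_def q_def algebra_simps flip: scaleR_add_left scaleR_2)
  have "cstar (b * q) * (b * q) = q * a * q"
    using sa_q by (simp add: a_def selfadjoint_def mult.assoc)
  also have "\<dots> = q * p * q - q * q * q" by (simp add: a_pq algebra_simps)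
  also have "\<dots> = - (q * (q * q))" using qp by (simp add: mult.assoc)
  finally have "cstar (b * q) * (b * q) = - (q * (q * q))" .
  moreover have "spec_positive (q * (q * q))"
    by (rule spec_positive_mult_commuting[OF pos_q spec_positive_square[OF sa_q]]) (simp add: mult.assoc)
  ultimately have "q * (q * q) = 0"
    using cstar_mult_eq_zero_if_negative[of "b * q"] by simp
  then have "q = 0" using selfadjoint_cube_eq_zero[OF sa_q] by (simp add: mult.assoc)
  then have "a = m" using a_pq m_pq by simp
  then show ?thesis using m(2) by (simp add: a_def)
qed

lemma positive_el_iff_spec_positive: "positive_el a \<longleftrightarrow> spec_positive (a::'a::cstar_algebra)"
proof
  assume "positive_el a"
  then show "spec_positive a" unfolding positive_el_def using spec_positive_cstar_mult by auto
next
  assume "spec_positive a"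
  then obtain s where "selfadjoint s" "s * s = a" using spec_positive_sqrt by blast
  then show "positive_el a" unfolding positive_el_def selfadjoint_def by metis
qed

lemma cstar_mult_add_eq_zero:
  assumes "cstar x * x + cstar y * y = 0" shows "x = (0::'a::cstar_algebra)"
proof -
  have "- (cstar x * x) = cstar y * y" using assms by (simp add: neg_eq_iff_add_eq_0)
  then have "cstar x * x = 0"
    using spec_positive_antisym spec_positive_cstar_mult by metis
  then show ?thesis using norm_cstar_mult_self[of x] by simp
qed

section \<open>Linear, multiplicative and positive maps\<close>

lemma clinear_map_add: "clinear_map f \<Longrightarrow> f (a + b) = f a + f b"
  and clinear_map_cscale: "clinear_map f \<Longrightarrow> f (c *\<^sub>C a) = c *\<^sub>C f a"
  by (simp_all add: clinear_map_def)

lemma clinear_map_zero: "clinear_map f \<Longrightarrow> f 0 = 0"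
  using clinear_map_add[of f 0 0] by simp

lemma clinear_map_diff: "clinear_map f \<Longrightarrow> f (a - b) = f a - f b"
  using clinear_map_add[of f "a - b" b] by (simp add: eq_diff_eq)

lemma clinear_map_scaleR: "clinear_map f \<Longrightarrow> f (r *\<^sub>R a) = r *\<^sub>R f a"
  using clinear_map_cscale[of f "complex_of_real r" a] by (simp add: cscale_of_real)

lemma clinear_map_imag_one: "clinear_map f \<Longrightarrow> f (imag_one * a) = imag_one * f a"
  using clinear_map_cscale[of f "\<i>" a] by (simp add: imag_one_mult)

lemma star_endo_clinear: "star_endo f \<Longrightarrow> clinear_map f"
  and star_endo_mult: "star_endo f \<Longrightarrow> f (a * b) = f a * f b"
  and star_endo_cstar: "star_endo f \<Longrightarrow> f (cstar a) = cstar (f a)"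
  by (simp_all add: star_endo_def)

lemmas star_endo_add = clinear_map_add[OF star_endo_clinear]
  and star_endo_cscale = clinear_map_cscale[OF star_endo_clinear]
  and star_endo_zero = clinear_map_zero[OF star_endo_clinear]
  and star_endo_diff = clinear_map_diff[OF star_endo_clinear]

lemma star_endo_one_idem: "star_endo f \<Longrightarrow> f 1 * f 1 = f 1"
  and star_endo_one_selfadjoint: "star_endo f \<Longrightarrow> selfadjoint (f 1)"
  and star_endo_one_right: "star_endo f \<Longrightarrow> f a * f 1 = f a"
  and star_endo_one_left: "star_endo f \<Longrightarrow> f 1 * f a = f a"
  by (metis star_endo_mult star_endo_cstar cstar_one selfadjoint_def mult_1_left mult_1_right)+

lemma positive_map_selfadjoint:
  assumes "clinear_map L" "positive_map L" "selfadjoint h" shows "selfadjoint (L h)"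
proof -
  obtain u v where "h = cstar u * u - cstar v * v" using selfadjoint_as_diff_squares[OF assms(3)] by blast
  then have "L h = L (cstar u * u) - L (cstar v * v)" using clinear_map_diff[OF assms(1)] by metis
  moreover have "positive_el (L (cstar u * u))" "positive_el (L (cstar v * v))"
    using assms(2) unfolding positive_map_def positive_el_def by blast+
  ultimately show ?thesis by (auto simp: positive_el_def selfadjoint_def)
qed

lemma positive_map_cstar:
  assumes "clinear_map L" "positive_map L" shows "L (cstar a) = cstar (L a)"
proof -
  have "selfadjoint (L (re_part a))" "selfadjoint (L (im_part a))"
    using positive_map_selfadjoint[OF assms] selfadjoint_re_part selfadjoint_im_part by blast+
  moreover have "L (cstar a) = L (re_part a) - imag_one * L (im_part a)"
    by (subst re_im_cstar) (simp add: clinear_map_diff[OF assms(1)] clinear_map_imag_one[OF assms(1)])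
  moreover have "L a = L (re_part a) + imag_one * L (im_part a)"
    by (subst re_im_decomp) (simp add: clinear_map_add[OF assms(1)] clinear_map_imag_one[OF assms(1)])
  ultimately show ?thesis by (simp add: selfadjoint_def cstar_imag_one imag_one_commute)
qed

lemma positive_map_spec_positive: "positive_map L \<Longrightarrow> spec_positive a \<Longrightarrow> spec_positive (L a)"
  by (simp add: positive_map_def positive_el_iff_spec_positive)

text \<open>For self-adjoint h, -\<parallel>h\<parallel> \<le> h \<le> \<parallel>h\<parallel> and L 1 \<le> 1 give -\<parallel>h\<parallel> \<le> L h \<le> \<parallel>h\<parallel>; the general case
  splits a into real and imaginary parts.\<close>

lemma positive_map_norm_le:
  assumes "clinear_map L" "positive_map L" "spec_positive (1 - L 1)"
  shows "norm (L a) \<le> 2 * norm a"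
proof -
  have selfadjoint_le: "norm (L h) \<le> norm h" if "selfadjoint h" for h
  proof -
    define l where "l = norm h"
    have l0: "l \<ge> 0" by (simp add: l_def)
    have margin: "spec_positive (l *\<^sub>R (1 - L 1))" by (rule spec_positive_scaleR[OF assms(3) l0])
    have "l *\<^sub>R 1 - L h = l *\<^sub>R (1 - L 1) + L (l *\<^sub>R 1 - h)"
      by (simp add: clinear_map_diff[OF assms(1)] clinear_map_scaleR[OF assms(1)] algebra_simps)
    also have "spec_positive \<dots>"
      by (intro spec_positive_add margin positive_map_spec_positive[OF assms(2)]
          spec_positive_bound_diff) (simp_all add: l_def that)
    finally have upper: "spec_positive (l *\<^sub>R 1 - L h)" .
    have "l *\<^sub>R 1 + L h = l *\<^sub>R (1 - L 1) + L (l *\<^sub>R 1 + h)"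
      by (simp add: clinear_map_add[OF assms(1)] clinear_map_scaleR[OF assms(1)] algebra_simps)
    also have "spec_positive \<dots>"
      by (intro spec_positive_add margin positive_map_spec_positive[OF assms(2)]
          spec_positive_bound_add) (simp_all add: l_def that)
    finally have lower: "spec_positive (l *\<^sub>R 1 + L h)" .
    show ?thesis unfolding l_def[symmetric]
      by (rule norm_le_if_spec_positive_bounds[OF positive_map_selfadjoint[OF assms(1,2) that] l0 upper lower])
  qed
  have "L a = L (re_part a) + imag_one * L (im_part a)"
    by (subst re_im_decomp) (simp add: clinear_map_add[OF assms(1)] clinear_map_imag_one[OF assms(1)])
  then have "norm (L a) \<le> norm (L (re_part a)) + norm (imag_one::'a) * norm (L (im_part a))"
    by (metis norm_triangle_le norm_mult_ineq add_left_mono)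
  also have "\<dots> \<le> norm (re_part a) + norm (im_part a)"
    using selfadjoint_le[OF selfadjoint_re_part, of a] selfadjoint_le[OF selfadjoint_im_part, of a] by simp
  also have "\<dots> \<le> 2 * norm a" using norm_re_part[of a] norm_im_part[of a] by simp
  finally show ?thesis .
qed

lemma positive_map_continuous:
  assumes "clinear_map L" "positive_map L" "spec_positive (1 - L 1)"
  shows "continuous_on UNIV L"
proof -
  have "bounded_linear L"
    by (rule bounded_linear_intro[where K=2])
       (use clinear_map_add[OF assms(1)] clinear_map_scaleR[OF assms(1)] positive_map_norm_le[OF assms]
         in \<open>auto simp: mult.commute\<close>)
  then show ?thesis by (rule linear_continuous_on)
qed

section \<open>Corners and hereditary subalgebras\<close>

definition corner :: "'a::cstar_algebra \<Rightarrow> 'a set" where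
  "corner e = {e * a * e | a. True}"

lemma mem_corner_iff: assumes "e * e = e" shows "y \<in> corner e \<longleftrightarrow> e * y * e = y"
proof
  assume "y \<in> corner e"
  then obtain a where "y = e * a * e" by (auto simp: corner_def)
  then show "e * y * e = y" using assms by (metis mult.assoc)
next
  assume "e * y * e = y"
  then show "y \<in> corner e" unfolding corner_def by (auto intro!: exI[of _ y])
qed

lemma star_endo_range_subset_corner:
  assumes "star_endo f" shows "range f \<subseteq> corner (f 1)"
  using assms by (auto simp: mem_corner_iff star_endo_one_idem star_endo_one_left star_endo_one_right)

lemma cstar_subalgebra_corner:
  assumes idem: "e * e = e" and sa_e: "selfadjoint e"
  shows "cstar_subalgebra (corner (e::'a::cstar_algebra))"
  unfolding cstar_subalgebra_def
proof (intro conjI ballI allI)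
  note mem = mem_corner_iff[OF idem]
  show "0 \<in> corner e" by (simp add: mem)
  fix a b assume "a \<in> corner e" "b \<in> corner e"
  then have a: "e * a * e = a" and b: "e * b * e = b" by (simp_all add: mem)
  show "a + b \<in> corner e" using a b by (simp add: mem algebra_simps)
  have "e * (a * b) * e = (e * a) * (b * e)" by (simp add: mult.assoc)
  also have "\<dots> = a * b" using a b idem by (metis mult.assoc)
  finally show "a * b \<in> corner e" by (simp add: mem)
  show "cstar a \<in> corner e" using sa_e a cstar_mult[of "e * a" e] by (simp add: mem selfadjoint_def mult.assoc)
  fix c show "c *\<^sub>C a \<in> corner e" using a by (simp add: mem cscale_mult_left cscale_mult_right)
next
  have "corner e = {y. e * y * e = y}" using mem_corner_iff[OF idem] by auto
  moreover have "closed {y. e * y * e = (y::'a)}" by (intro closed_Collect_eq continuous_intros)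
  ultimately show "closed (corner e)" by simp
qed

text \<open>With g = 1 - e: from 0 \<le> a \<le> b and g b = 0 we get (c g)* (c g) + (d g)* (d g) = g b g = 0
  for a = c* c, b - a = d* d, hence a g = 0.\<close>

lemma corner_hereditary_mem:
  assumes idem: "e * e = e" and sa_e: "selfadjoint e"
    and "b \<in> corner e" "positive_el a" "positive_el (b - a)"
  shows "a \<in> corner (e::'a::cstar_algebra)"
proof -
  obtain c where c: "a = cstar c * c" using assms(4) by (auto simp: positive_el_def)
  obtain d where d: "b - a = cstar d * d" using assms(5) by (auto simp: positive_el_def)
  define g where "g = 1 - e"
  have sa_g: "cstar g = g" using sa_e by (simp add: g_def selfadjoint_def)
  have "e * b * e = b" using assms(3) by (simp add: mem_corner_iff[OF idem])
  then have "g * b = g * e * b * e" by (simp add: mult.assoc)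
  also have "g * e = 0" using idem by (simp add: g_def algebra_simps)
  finally have gb: "g * b = 0" by simp
  have "cstar (c * g) * (c * g) + cstar (d * g) * (d * g) = g * (cstar c * c + cstar d * d) * g"
    using sa_g by (simp add: mult.assoc algebra_simps)
  also have "\<dots> = g * b * g" using c d by (simp add: algebra_simps)
  also have "\<dots> = 0" using gb by simp
  finally have "c * g = 0" by (rule cstar_mult_add_eq_zero)
  then have ag: "a * g = 0" using c by (simp add: mult.assoc)
  then have ga: "g * a = 0" using c sa_g cstar_mult[of a g] by simp
  have "a = (e + g) * a * (e + g)" by (simp add: g_def)
  also have "\<dots> = e * a * e" using ag ga by (simp add: algebra_simps)
  finally show ?thesis by (simp add: mem_corner_iff[OF idem] idem mult.assoc)
qed

lemma hereditary_corner:
  "e * e = e \<Longrightarrow> selfadjoint e \<Longrightarrow> hereditary_subalgebra (corner (e::'a::cstar_algebra))"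
  unfolding hereditary_subalgebra_def using cstar_subalgebra_corner corner_hereditary_mem by blast

lemma cstar_subalgebra_add: "cstar_subalgebra B \<Longrightarrow> a \<in> B \<Longrightarrow> b \<in> B \<Longrightarrow> a + b \<in> B"
  and cstar_subalgebra_cscale: "cstar_subalgebra B \<Longrightarrow> a \<in> B \<Longrightarrow> c *\<^sub>C a \<in> B"
  by (simp_all add: cstar_subalgebra_def)

lemma cstar_subalgebra_scaleR: "cstar_subalgebra B \<Longrightarrow> a \<in> B \<Longrightarrow> r *\<^sub>R a \<in> B"
  using cstar_subalgebra_cscale[of B a "complex_of_real r"] by (simp add: cscale_of_real)

lemma cstar_subalgebra_diff: "cstar_subalgebra B \<Longrightarrow> a \<in> B \<Longrightarrow> b \<in> B \<Longrightarrow> a - b \<in> B"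
  using cstar_subalgebra_add[of B a "(-1) *\<^sub>R b"] cstar_subalgebra_scaleR[of B b "-1"] by simp

text \<open>0 \<le> e b* b e \<le> \<parallel>b e\<parallel>^2 e.\<close>

lemma hereditary_compress_mem:
  assumes her: "hereditary_subalgebra B" and e: "e \<in> B" "e * e = e" "selfadjoint e"
  shows "cstar (b * e) * (b * e) \<in> B"
proof -
  define a where "a = cstar (b * e) * (b * e)"
  define M where "M = norm a"
  have "selfadjoint a" unfolding a_def by (rule selfadjoint_cstar_mult)
  then have "spec_positive (M *\<^sub>R 1 - a)" by (rule spec_positive_bound_diff) (simp add: M_def)
  then obtain r where r: "M *\<^sub>R 1 - a = cstar r * r"
    unfolding positive_el_iff_spec_positive[symmetric] positive_el_def by blast
  have "e * (e * x) = e * x" for x using e(2) by (metis mult.assoc)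
  then have "e * a * e = a" using e(2,3) by (simp add: a_def selfadjoint_def mult.assoc)
  then have "M *\<^sub>R e - a = e * (M *\<^sub>R 1 - a) * e" using e(2) by (simp add: algebra_simps)
  also have "\<dots> = cstar (r * e) * (r * e)" using r e(3) by (simp add: selfadjoint_def mult.assoc)
  finally have "positive_el (M *\<^sub>R e - a)" unfolding positive_el_def by blast
  moreover have "M *\<^sub>R e \<in> B"
    using her e(1) by (simp add: hereditary_subalgebra_def cstar_subalgebra_scaleR)
  moreover have "positive_el a" unfolding a_def positive_el_def by blast
  ultimately show ?thesis using her unfolding hereditary_subalgebra_def a_def by blast
qed

lemma corner_subset_hereditary:
  assumes her: "hereditary_subalgebra B" and e: "e \<in> B" "e * e = e" "selfadjoint e"
  shows "corner e \<subseteq> (B::'a::cstar_algebra set)"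
proof
  have sub: "cstar_subalgebra B" using her by (simp add: hereditary_subalgebra_def)
  have selfadjoint_mem: "e * h * e \<in> B" if sa_h: "selfadjoint h" for h
  proof -
    obtain u v where h: "h = cstar u * u - cstar v * v" using selfadjoint_as_diff_squares[OF sa_h] by blast
    have "e * h * e = e * (cstar u * u) * e - e * (cstar v * v) * e" unfolding h by (simp add: algebra_simps)
    also have "\<dots> = cstar (u * e) * (u * e) - cstar (v * e) * (v * e)"
      using e(3) by (simp add: selfadjoint_def mult.assoc)
    finally have "e * h * e = cstar (u * e) * (u * e) - cstar (v * e) * (v * e)" .
    then show ?thesis
      using cstar_subalgebra_diff[OF sub hereditary_compress_mem[OF her e] hereditary_compress_mem[OF her e]]
      by simp
  qed
  fix y assume "y \<in> corner e"
  then obtain a where y: "y = e * a * e" by (auto simp: corner_def)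
  have j: "e * (imag_one * im_part a) * e = imag_one * (e * im_part a * e)"
    by (simp add: mult.assoc[symmetric] imag_one_commute[of e, symmetric])
  have "y = e * (re_part a + imag_one * im_part a) * e" using y re_im_decomp[of a] by simp
  also have "\<dots> = e * re_part a * e + \<i> *\<^sub>C (e * im_part a * e)"
    unfolding distrib_left distrib_right j by (simp only: imag_one_mult)
  finally have "y = e * re_part a * e + \<i> *\<^sub>C (e * im_part a * e)" .
  then show "y \<in> B"
    using selfadjoint_mem[OF selfadjoint_re_part] selfadjoint_mem[OF selfadjoint_im_part]
    by (simp add: cstar_subalgebra_add cstar_subalgebra_cscale sub)
qed

lemma hereditary_range_eq_corner:
  assumes "star_endo f" "hereditary_subalgebra (range f)"
  shows "range f = corner (f 1)"
  using star_endo_range_subset_corner[OF assms(1)] corner_subset_hereditary[OF assms(2)]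
    star_endo_one_idem[OF assms(1)] star_endo_one_selfadjoint[OF assms(1)] by blast

text \<open>The positive square root of e a e lies in the corner, because it commutes with e.\<close>

lemma corner_sqrt_compress:
  assumes idem: "e * e = e" and sa_e: "selfadjoint e" and "positive_el a"
  obtains t where "t \<in> corner e" "selfadjoint t" "t * t = e * a * (e::'a::cstar_algebra)"
proof -
  obtain c where "a = cstar c * c" using assms(3) by (auto simp: positive_el_def)
  then have "e * a * e = cstar (c * e) * (c * e)" using sa_e by (simp add: selfadjoint_def mult.assoc)
  then obtain s where s: "selfadjoint s" "s * s = e * a * e"
    "\<And>z. z * (e * a * e) = (e * a * e) * z \<Longrightarrow> z * s = s * z"
    using spec_positive_sqrt[OF spec_positive_cstar_mult[of "c * e"]] by metis
  have "e * (e * a * e) = (e * a * e) * e" using idem by (metis mult.assoc)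
  then have es: "e * s = s * e" using s(3) by blast
  have "(e * s) * (e * s) = e * a * e" using es idem s(2) by (metis mult.assoc)
  moreover have "e * s \<in> corner e" using es idem by (simp add: mem_corner_iff[OF idem]) (metis mult.assoc)
  moreover have "selfadjoint (e * s)" using s(1) sa_e es by (simp add: selfadjoint_def)
  ultimately show ?thesis using that by blast
qed

section \<open>Central projections supporting a *-endomorphism\<close>

lemma central_projection_idem: "central_projection Q \<Longrightarrow> Q * Q = Q"
  and central_projection_selfadjoint: "central_projection Q \<Longrightarrow> selfadjoint Q"
  and central_projection_commute: "central_projection Q \<Longrightarrow> Q * a = a * Q"
  unfolding central_projection_def selfadjoint_def by blast+

lemma range_mult_central_projection_iff:
  assumes "central_projection Q" shows "z \<in> range ((*) Q) \<longleftrightarrow> Q * z = z"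
  using central_projection_idem[OF assms] by (metis mult.assoc rangeE rangeI)

definition support_projection :: "('a::cstar_algebra \<Rightarrow> 'a) \<Rightarrow> 'a \<Rightarrow> bool" where
  "support_projection f Q \<longleftrightarrow> central_projection Q \<and> bij_betw f (range ((*) Q)) (range f)"

context
  fixes f :: "'a::cstar_algebra \<Rightarrow> 'a" and Q :: 'a
  assumes se: "star_endo f" and supp: "support_projection f Q"
begin

lemma support_projection_central: "central_projection Q"
  using supp by (simp add: support_projection_def)

lemma support_projection_inj_on: "inj_on f (range ((*) Q))"
  and support_projection_image: "f ` range ((*) Q) = range f"
  using supp by (simp_all add: support_projection_def bij_betw_def)

text \<open>f(1 - Q) = f(Q z) for some z, and then f(1 - Q) = f(Q z) f(Q) = f(1 - Q) f(Q) = f((1 - Q) Q) = 0.\<close>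

lemma support_projection_complement: "f (1 - Q) = 0"
proof -
  obtain z where z: "f (1 - Q) = f (Q * z)" using support_projection_image by (metis rangeI imageE)
  have "f (Q * z) = f (Q * z * Q)"
    using central_projection_commute[OF support_projection_central, of z]
      central_projection_idem[OF support_projection_central] by (metis mult.assoc)
  then have "f (1 - Q) = f (1 - Q) * f Q" using z by (simp add: star_endo_mult[OF se])
  also have "\<dots> = f ((1 - Q) * Q)" by (simp add: star_endo_mult[OF se])
  also have "\<dots> = 0"
    using central_projection_idem[OF support_projection_central] by (simp add: algebra_simps star_endo_zero[OF se])
  finally show ?thesis .
qed

lemma support_projection_apply: "f Q = f 1"
  using support_projection_complement by (simp add: star_endo_diff[OF se])

lemma support_projection_eq_zero:
  assumes "f (Q * z) = 0" shows "Q * z = 0"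
proof -
  have "f (Q * z) = f (Q * 0)" using assms by (simp add: star_endo_zero[OF se])
  then show ?thesis using inj_onD[OF support_projection_inj_on] by (metis mult_zero_right rangeI)
qed

end

lemma support_projection_unique:
  assumes se: "star_endo f" and "support_projection f Q" "support_projection f Q'"
  shows "Q = Q'"
proof -
  have "f (Q * (1 - Q')) = 0"
    using support_projection_complement[OF se assms(3)] by (simp add: star_endo_mult[OF se])
  then have "Q * (1 - Q') = 0" by (rule support_projection_eq_zero[OF se assms(2)])
  then have "Q = Q * Q'" by (simp add: algebra_simps)
  moreover have "f (Q' * (1 - Q)) = 0"
    using support_projection_complement[OF se assms(2)] by (simp add: star_endo_mult[OF se])
  then have "Q' * (1 - Q) = 0" by (rule support_projection_eq_zero[OF se assms(3)])
  then have "Q' = Q' * Q" by (simp add: algebra_simps)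
  ultimately show ?thesis
    using central_projection_commute[OF support_projection_central[OF se assms(2)], of Q'] by simp
qed

section \<open>A single transfer map\<close>

definition transfer_map :: "('a::cstar_algebra \<Rightarrow> 'a) \<Rightarrow> ('a \<Rightarrow> 'a) \<Rightarrow> bool" where
  "transfer_map f L \<longleftrightarrow> star_endo f \<and> clinear_map L \<and> positive_map L \<and> (\<forall>a b. L (f a * b) = a * L b)"

definition nondegenerate_map :: "('a::cstar_algebra \<Rightarrow> 'a) \<Rightarrow> ('a \<Rightarrow> 'a) \<Rightarrow> bool" where
  "nondegenerate_map f L \<longleftrightarrow> (\<forall>c. f (L (f c)) = f c)"

definition complete_map :: "('a::cstar_algebra \<Rightarrow> 'a) \<Rightarrow> ('a \<Rightarrow> 'a) \<Rightarrow> bool" where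
  "complete_map f L \<longleftrightarrow> (\<forall>a. f (L a) = f 1 * a * f 1)"

lemma complete_map_nondegenerate:
  "star_endo f \<Longrightarrow> complete_map f L \<Longrightarrow> nondegenerate_map f L"
  unfolding complete_map_def nondegenerate_map_def
  by (simp add: star_endo_one_left star_endo_one_right flip: mult.assoc)

lemma complete_map_range:
  assumes "star_endo f" "complete_map f L" shows "range f = corner (f 1)"
proof
  show "range f \<subseteq> corner (f 1)" by (rule star_endo_range_subset_corner[OF assms(1)])
  show "corner (f 1) \<subseteq> range f"
  proof
    fix y assume "y \<in> corner (f 1)"
    then obtain a where "y = f 1 * a * f 1" by (auto simp: corner_def)
    then have "y = f (L a)" using assms(2) by (simp add: complete_map_def)
    then show "y \<in> range f" by simp
  qed
qed

context
  fixes f L :: "'a::cstar_algebra \<Rightarrow> 'a"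
  assumes tm: "transfer_map f L"
begin

lemma transfer_map_star_endo: "star_endo f"
  and transfer_map_clinear: "clinear_map L"
  and transfer_map_positive: "positive_map L"
  and transfer_map_left: "L (f a * b) = a * L b"
  using tm by (simp_all add: transfer_map_def)

lemma transfer_map_right: "L (b * f c) = L b * c"
proof -
  note cstar_L = positive_map_cstar[OF transfer_map_clinear transfer_map_positive]
  have "cstar (L (b * f c)) = L (cstar (b * f c))" by (rule cstar_L[symmetric])
  also have "cstar (b * f c) = f (cstar c) * cstar b" by (simp add: star_endo_cstar[OF transfer_map_star_endo])
  also have "L (f (cstar c) * cstar b) = cstar (L b * c)" by (simp add: transfer_map_left cstar_L)
  finally show ?thesis by (metis cstar_cstar)
qed

lemma transfer_map_central: "c * L 1 = L 1 * c"
  using transfer_map_left[of c 1] transfer_map_right[of 1 c] by simp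

lemma transfer_map_compress: "L a = L (f 1 * a * f 1)"
proof -
  have "L ((1 - f 1) * z) = 0" for z
    using transfer_map_left[of 1 z] by (simp add: algebra_simps clinear_map_diff[OF transfer_map_clinear])
  moreover have "L (z * (1 - f 1)) = 0" for z
    using transfer_map_right[of z 1] by (simp add: algebra_simps clinear_map_diff[OF transfer_map_clinear])
  moreover have "a = f 1 * a * f 1 + (f 1 * a) * (1 - f 1) + (1 - f 1) * a" by (simp add: algebra_simps)
  then have "L a = L (f 1 * a * f 1) + L ((f 1 * a) * (1 - f 1)) + L ((1 - f 1) * a)"
    by (metis clinear_map_add[OF transfer_map_clinear])
  ultimately show ?thesis by simp
qed

lemma complete_map_if_nondegenerate:
  assumes "nondegenerate_map f L" "range f = corner (f 1)" shows "complete_map f L"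
  unfolding complete_map_def
proof
  fix a
  obtain c where c: "f 1 * a * f 1 = f c" using assms(2) by (auto simp: corner_def)
  have "f (L a) = f (L (f c))" using transfer_map_compress[of a] c by simp
  also have "\<dots> = f c" using assms(1) by (simp add: nondegenerate_map_def)
  finally show "f (L a) = f 1 * a * f 1" using c by simp
qed

context
  assumes nd: "nondegenerate_map f L"
begin

lemma nondegenerate_map_one: "f (L 1) = f 1"
  using nd transfer_map_left[of 1 1] unfolding nondegenerate_map_def by (metis mult_1_left mult_1_right)

lemma nondegenerate_map_one_idem: "L 1 * L 1 = L 1"
  using transfer_map_left[of "L 1" 1] nondegenerate_map_one transfer_map_left[of 1 1] by simp

lemma nondegenerate_map_range: "L b = L 1 * L b"
proof -
  have "(1 - L 1) * L b = L (f (1 - L 1) * b)" by (rule transfer_map_left[symmetric])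
  also have "\<dots> = 0"
    using nondegenerate_map_one
    by (simp add: star_endo_diff[OF transfer_map_star_endo] clinear_map_zero[OF transfer_map_clinear])
  finally show ?thesis by (simp add: algebra_simps)
qed

lemma nondegenerate_map_support_projection: "support_projection f (L 1)"
  unfolding support_projection_def bij_betw_def
proof (intro conjI)
  note se = transfer_map_star_endo
  have "cstar (L 1) = L 1"
    using positive_map_cstar[OF transfer_map_clinear transfer_map_positive, of 1] by simp
  then show "central_projection (L 1)"
    using nondegenerate_map_one_idem transfer_map_central[symmetric] unfolding central_projection_def by blast
  show "inj_on f (range ((*) (L 1)))"
  proof (rule inj_onI)
    fix x y assume "x \<in> range ((*) (L 1))" "y \<in> range ((*) (L 1))" "f x = f y"
    then obtain u v where uv: "x = L 1 * u" "y = L 1 * v" by auto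
    then have "f (L 1 * (u - v)) = 0"
      using \<open>f x = f y\<close> by (simp add: right_diff_distrib star_endo_diff[OF se])
    have "L (f (L 1 * (u - v))) = L 1 * (L 1 * (u - v))" by (rule transfer_map_right[of 1, simplified])
    also have "\<dots> = L 1 * (u - v)" using nondegenerate_map_one_idem by (simp flip: mult.assoc)
    finally have "L 1 * (u - v) = 0"
      using \<open>f (L 1 * (u - v)) = 0\<close> clinear_map_zero[OF transfer_map_clinear] by simp
    then show "x = y" using uv by (simp add: right_diff_distrib)
  qed
  have f_eq: "f c = f (L 1 * c)" for c
  proof -
    have "f c - f (L 1 * c) = f (1 - L 1) * f c"
      by (simp add: star_endo_mult[OF se] star_endo_diff[OF se] star_endo_one_left[OF se] left_diff_distrib)
    then show ?thesis using nondegenerate_map_one by (simp add: star_endo_diff[OF se])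
  qed
  show "f ` range ((*) (L 1)) = range f"
  proof
    show "range f \<subseteq> f ` range ((*) (L 1))"
    proof
      fix y assume "y \<in> range f"
      then obtain c where "y = f c" by blast
      then show "y \<in> f ` range ((*) (L 1))" using f_eq[of c] by blast
    qed
  qed blast
qed

end

end

section \<open>The canonical transfer map\<close>

definition canonical_transfer :: "('a::cstar_algebra \<Rightarrow> 'a) \<Rightarrow> 'a \<Rightarrow> 'a \<Rightarrow> 'a" where
  "canonical_transfer f Q a = the_inv_into (range ((*) Q)) f (f 1 * a * f 1)"

context
  fixes f :: "'a::cstar_algebra \<Rightarrow> 'a" and Q :: 'a
  assumes se: "star_endo f" and supp: "support_projection f Q" and re: "range f = corner (f 1)"
begin

private lemma cp: "central_projection Q"
  by (rule support_projection_central[OF se supp])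

lemma canonical_transfer_mem: "Q * canonical_transfer f Q a = canonical_transfer f Q a"
  and canonical_transfer_apply: "f (canonical_transfer f Q a) = f 1 * a * f 1"
proof -
  have "f 1 * a * f 1 \<in> f ` range ((*) Q)"
    using support_projection_image[OF se supp] re by (auto simp: corner_def)
  then have "canonical_transfer f Q a \<in> range ((*) Q) \<and> f (canonical_transfer f Q a) = f 1 * a * f 1"
    unfolding canonical_transfer_def using support_projection_inj_on[OF se supp]
    by (auto intro: the_inv_into_into f_the_inv_into_f)
  then show "Q * canonical_transfer f Q a = canonical_transfer f Q a" "f (canonical_transfer f Q a) = f 1 * a * f 1"
    using range_mult_central_projection_iff[OF cp] by auto
qed

lemma canonical_transfer_eqI:
  assumes "Q * z = z" "f z = f 1 * a * f 1" shows "canonical_transfer f Q a = z"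
  unfolding canonical_transfer_def
  using the_inv_into_f_eq[OF support_projection_inj_on[OF se supp] assms(2)]
    range_mult_central_projection_iff[OF cp] assms(1) by blast

lemma canonical_transfer_one: "canonical_transfer f Q 1 = Q"
  using canonical_transfer_eqI[of Q 1] central_projection_idem[OF cp]
    support_projection_apply[OF se supp] star_endo_one_idem[OF se] by simp

lemma canonical_transfer_clinear: "clinear_map (canonical_transfer f Q)"
  unfolding clinear_map_def
proof (intro conjI allI)
  fix a b
  show "canonical_transfer f Q (a + b) = canonical_transfer f Q a + canonical_transfer f Q b"
    by (rule canonical_transfer_eqI)
       (simp_all add: canonical_transfer_mem canonical_transfer_apply star_endo_add[OF se] algebra_simps)
next
  fix c a
  show "canonical_transfer f Q (c *\<^sub>C a) = c *\<^sub>C canonical_transfer f Q a"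
    by (rule canonical_transfer_eqI)
       (simp_all add: canonical_transfer_mem canonical_transfer_apply star_endo_cscale[OF se]
         cscale_mult_left cscale_mult_right)
qed

lemma canonical_transfer_left: "canonical_transfer f Q (f a * b) = a * canonical_transfer f Q b"
proof (rule canonical_transfer_eqI)
  show "Q * (a * canonical_transfer f Q b) = a * canonical_transfer f Q b"
    using canonical_transfer_mem[of b] central_projection_commute[OF cp] by (metis mult.assoc)
  have "f (a * canonical_transfer f Q b) = (f a * f 1) * b * f 1"
    by (simp add: star_endo_mult[OF se] canonical_transfer_apply mult.assoc)
  also have "\<dots> = (f 1 * f a) * b * f 1"
    by (simp only: star_endo_one_left[OF se] star_endo_one_right[OF se])
  also have "\<dots> = f 1 * (f a * b) * f 1" by (simp only: mult.assoc)
  finally show "f (a * canonical_transfer f Q b) = f 1 * (f a * b) * f 1" .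
qed

text \<open>f 1 a f 1 = t t with t in the corner; if f v = t and v \<in> Q\<A>, the positive element v* v
  is the canonical transfer of a.\<close>

lemma canonical_transfer_positive: "positive_map (canonical_transfer f Q)"
  unfolding positive_map_def
proof (intro allI impI)
  fix a :: 'a assume "positive_el a"
  then obtain t where t: "t \<in> corner (f 1)" "selfadjoint t" "t * t = f 1 * a * f 1"
    using corner_sqrt_compress[OF star_endo_one_idem[OF se] star_endo_one_selfadjoint[OF se]] by blast
  then have "t \<in> f ` range ((*) Q)" using re support_projection_image[OF se supp] by simp
  then obtain v where v: "v \<in> range ((*) Q)" "f v = t" by blast
  have Qv: "Q * v = v" using v(1) range_mult_central_projection_iff[OF cp] by blast
  have "canonical_transfer f Q a = cstar v * v"
  proof (rule canonical_transfer_eqI)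
    show "Q * (cstar v * v) = cstar v * v"
      using Qv central_projection_commute[OF cp, of "cstar v"] by (metis mult.assoc)
    show "f (cstar v * v) = f 1 * a * f 1"
      using v(2) t(2,3) by (simp add: star_endo_mult[OF se] star_endo_cstar[OF se] selfadjoint_def)
  qed
  then show "positive_el (canonical_transfer f Q a)" unfolding positive_el_def by blast
qed

lemma canonical_transfer_map: "transfer_map f (canonical_transfer f Q)"
  unfolding transfer_map_def
  using se canonical_transfer_clinear canonical_transfer_positive canonical_transfer_left by blast

lemma canonical_transfer_complete: "complete_map f (canonical_transfer f Q)"
  by (simp add: complete_map_def canonical_transfer_apply)

text \<open>1 - canonical_transfer f Q 1 = 1 - Q is a projection, hence positive.\<close>

lemma canonical_transfer_continuous: "continuous_on UNIV (canonical_transfer f Q)"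
proof (rule positive_map_continuous[OF canonical_transfer_clinear canonical_transfer_positive])
  have "(1 - Q) * (1 - Q) = 1 - Q" using central_projection_idem[OF cp] by (simp add: algebra_simps)
  then show "spec_positive (1 - canonical_transfer f Q 1)"
    using spec_positive_square[of "1 - Q"] central_projection_selfadjoint[OF cp]
    by (simp add: canonical_transfer_one selfadjoint_diff)
qed

lemma eq_canonical_transfer:
  assumes "transfer_map f L" "nondegenerate_map f L"
  shows "L = canonical_transfer f Q"
proof
  fix a
  have "Q = L 1"
    by (rule support_projection_unique[OF se supp nondegenerate_map_support_projection[OF assms]])
  then have "Q * L a = L a" using nondegenerate_map_range[OF assms] by simp
  moreover have "f (L a) = f 1 * a * f 1"
    using complete_map_if_nondegenerate[OF assms re] by (simp add: complete_map_def)
  ultimately show "L a = canonical_transfer f Q a" by (simp add: canonical_transfer_eqI)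
qed

end

section \<open>Transfer actions of a semigroup of *-endomorphisms\<close>

context
  fixes \<alpha> :: "'g::linordered_ab_group_add \<Rightarrow> 'a::cstar_algebra \<Rightarrow> 'a"
  assumes es: "endo_semigroup \<alpha>"
begin

lemma endo_semigroup_star_endo: "0 \<le> x \<Longrightarrow> star_endo (\<alpha> x)"
  using es by (simp add: endo_semigroup_def)

lemma endo_semigroup_comp: "0 \<le> x \<Longrightarrow> 0 \<le> y \<Longrightarrow> \<alpha> x (\<alpha> y a) = \<alpha> (x + y) a"
  using es unfolding endo_semigroup_def by (metis comp_apply)

lemma transfer_action_map: "transfer_action \<alpha> L \<Longrightarrow> 0 \<le> x \<Longrightarrow> transfer_map (\<alpha> x) (L x)"
  unfolding transfer_action_def transfer_map_def using endo_semigroup_star_endo by blast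

lemma transfer_action_comp:
  "transfer_action \<alpha> L \<Longrightarrow> 0 \<le> x \<Longrightarrow> 0 \<le> y \<Longrightarrow> L (x + y) a = L y (L x a)"
  unfolding transfer_action_def by (metis comp_apply)

lemma nondegenerate_transfer_action_iff:
  "nondegenerate_transfer_action \<alpha> L \<longleftrightarrow>
     transfer_action \<alpha> L \<and> (\<forall>x. 0 \<le> x \<longrightarrow> nondegenerate_map (\<alpha> x) (L x))"
  unfolding nondegenerate_transfer_action_def nondegenerate_map_def by (auto simp: fun_eq_iff)

lemma complete_transfer_action_iff:
  "complete_transfer_action \<alpha> L \<longleftrightarrow> transfer_action \<alpha> L \<and> (\<forall>x. 0 \<le> x \<longrightarrow> complete_map (\<alpha> x) (L x))"
  unfolding complete_transfer_action_def complete_map_def by blast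

lemma projection_family_iff:
  "projection_family \<alpha> P \<longleftrightarrow> (\<forall>x. 0 \<le> x \<longrightarrow> support_projection (\<alpha> x) (P x))
     \<and> (\<forall>x y. 0 \<le> x \<longrightarrow> 0 \<le> y \<longrightarrow> \<alpha> x (P (x + y)) = \<alpha> x 1 * P y)"
  unfolding projection_family_def support_projection_def by blast

lemma complete_imp_nondegenerate_transfer_action:
  "complete_transfer_action \<alpha> L \<Longrightarrow> nondegenerate_transfer_action \<alpha> L"
  by (simp add: complete_transfer_action_iff nondegenerate_transfer_action_iff
      complete_map_nondegenerate endo_semigroup_star_endo)

lemma complete_transfer_action_range:
  assumes "complete_transfer_action \<alpha> L" "0 \<le> x" shows "range (\<alpha> x) = corner (\<alpha> x 1)"
  using assms complete_map_range[OF endo_semigroup_star_endo[OF assms(2)]]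
  unfolding complete_transfer_action_iff by blast

lemma nondegenerate_imp_complete_transfer_action:
  assumes "nondegenerate_transfer_action \<alpha> L" "\<And>x. 0 \<le> x \<Longrightarrow> range (\<alpha> x) = corner (\<alpha> x 1)"
  shows "complete_transfer_action \<alpha> L"
proof -
  have tr: "transfer_action \<alpha> L" and nd: "\<And>x::'g. 0 \<le> x \<Longrightarrow> nondegenerate_map (\<alpha> x) (L x)"
    using assms(1) by (simp_all add: nondegenerate_transfer_action_iff)
  show ?thesis
    unfolding complete_transfer_action_iff
    using tr complete_map_if_nondegenerate[OF transfer_action_map[OF tr] nd assms(2)] by blast
qed

lemma projection_family_transfer_one:
  assumes nd: "nondegenerate_transfer_action \<alpha> L"
    and re: "\<And>x. 0 \<le> x \<Longrightarrow> range (\<alpha> x) = corner (\<alpha> x 1)"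
  shows "projection_family \<alpha> (\<lambda>x. L x 1)"
  unfolding projection_family_iff
proof (intro conjI allI impI)
  have tr: "transfer_action \<alpha> L" and nd_x: "\<And>x::'g. 0 \<le> x \<Longrightarrow> nondegenerate_map (\<alpha> x) (L x)"
    using nd by (simp_all add: nondegenerate_transfer_action_iff)
  fix x :: 'g assume x: "0 \<le> x"
  show "support_projection (\<alpha> x) (L x 1)"
    by (rule nondegenerate_map_support_projection[OF transfer_action_map[OF tr x] nd_x[OF x]])
  fix y :: 'g assume y: "0 \<le> y"
  have "\<alpha> x (L (x + y) 1) = \<alpha> x (L x (L y 1))"
    using transfer_action_comp[OF tr y x] by (simp add: add.commute)
  also have "\<dots> = \<alpha> x 1 * L y 1 * \<alpha> x 1"
    using nondegenerate_imp_complete_transfer_action[OF nd re] x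
    by (simp add: complete_transfer_action_iff complete_map_def)
  also have "\<dots> = \<alpha> x 1 * \<alpha> x 1 * L y 1"
    using transfer_map_central[OF transfer_action_map[OF tr y], of "\<alpha> x 1"] by (metis mult.assoc)
  also have "\<dots> = \<alpha> x 1 * L y 1" by (simp add: star_endo_one_idem[OF endo_semigroup_star_endo[OF x]])
  finally show "\<alpha> x (L (x + y) 1) = \<alpha> x 1 * L y 1" .
qed

context
  fixes P :: "'g \<Rightarrow> 'a"
  assumes pf: "projection_family \<alpha> P"
    and re: "\<And>x. 0 \<le> x \<Longrightarrow> range (\<alpha> x) = corner (\<alpha> x 1)"
begin

private lemma family_support: "0 \<le> x \<Longrightarrow> support_projection (\<alpha> x) (P x)"
  using pf by (simp add: projection_family_iff)

private lemma family_central: "0 \<le> x \<Longrightarrow> central_projection (P x)"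
  using pf by (simp add: projection_family_def)

text \<open>With r = (1 - P_(x+y)) z in P_y A: \<alpha>_y(1 - P_(x+y)) = \<alpha>_y(1)(1 - P_x) annihilates w, so
  \<alpha>_y(r) = 0 and hence r = 0.\<close>

lemma projection_family_absorb:
  assumes x: "0 \<le> x" and y: "0 \<le> y" and w: "P x * w = w"
    and z: "P y * z = z" "\<alpha> y z = \<alpha> y 1 * w * \<alpha> y 1"
  shows "P (x + y) * z = z"
proof -
  note se = endo_semigroup_star_endo[OF y]
  define r where "r = (1 - P (x + y)) * z"
  have r_mem: "P y * r = r"
    using central_projection_commute[OF family_central[OF y], of "1 - P (x + y)"] z(1)
    by (simp add: r_def flip: mult.assoc) (simp add: mult.assoc)
  have "\<alpha> y (P (x + y)) = \<alpha> y 1 * P x"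
    using pf x y unfolding projection_family_def by (metis add.commute)
  then have "\<alpha> y (1 - P (x + y)) = \<alpha> y 1 * (1 - P x)" by (simp add: star_endo_diff[OF se] algebra_simps)
  then have "\<alpha> y r = \<alpha> y 1 * ((1 - P x) * \<alpha> y 1) * w * \<alpha> y 1"
    by (simp add: r_def star_endo_mult[OF se] z(2) mult.assoc)
  also have "(1 - P x) * \<alpha> y 1 = \<alpha> y 1 * (1 - P x)"
    using central_projection_commute[OF family_central[OF x], of "\<alpha> y 1"] by (simp add: algebra_simps)
  also have "\<alpha> y 1 * (\<alpha> y 1 * (1 - P x)) * w * \<alpha> y 1 = \<alpha> y 1 * \<alpha> y 1 * ((1 - P x) * w) * \<alpha> y 1"
    by (simp add: mult.assoc)
  also have "(1 - P x) * w = 0" using w by (simp add: algebra_simps)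
  finally have "\<alpha> y (P y * r) = 0" using r_mem by simp
  then have "P y * r = 0" by (rule support_projection_eq_zero[OF se family_support[OF y]])
  then have "r = 0" using r_mem by simp
  then show ?thesis by (simp add: r_def algebra_simps)
qed

lemma canonical_transfer_comp:
  assumes x: "0 \<le> x" and y: "0 \<le> y"
  shows "canonical_transfer (\<alpha> (x + y)) (P (x + y)) a
    = canonical_transfer (\<alpha> y) (P y) (canonical_transfer (\<alpha> x) (P x) a)"
proof -
  note se = endo_semigroup_star_endo
  define w z where "w = canonical_transfer (\<alpha> x) (P x) a" and "z = canonical_transfer (\<alpha> y) (P y) w"
  have w: "P x * w = w" "\<alpha> x w = \<alpha> x 1 * a * \<alpha> x 1"
    unfolding w_def using canonical_transfer_mem canonical_transfer_apply se[OF x] family_support[OF x] re[OF x] by blast+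
  have z: "P y * z = z" "\<alpha> y z = \<alpha> y 1 * w * \<alpha> y 1"
    unfolding z_def using canonical_transfer_mem canonical_transfer_apply se[OF y] family_support[OF y] re[OF y] by blast+
  define e where "e = \<alpha> x (\<alpha> y 1)"
  have e: "\<alpha> (x + y) 1 = e" using endo_semigroup_comp[OF x y] by (simp add: e_def)
  have e1: "e * \<alpha> x 1 = e" "\<alpha> x 1 * e = e"
    unfolding e_def by (rule star_endo_one_right[OF se[OF x]], rule star_endo_one_left[OF se[OF x]])
  have "\<alpha> (x + y) z = \<alpha> x (\<alpha> y z)" using endo_semigroup_comp[OF x y] by simp
  also have "\<dots> = (e * \<alpha> x 1) * a * (\<alpha> x 1 * e)"
    by (simp add: z star_endo_mult[OF se[OF x]] w e_def mult.assoc)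
  finally have "\<alpha> (x + y) z = \<alpha> (x + y) 1 * a * \<alpha> (x + y) 1" using e e1 by simp
  with x y have "canonical_transfer (\<alpha> (x + y)) (P (x + y)) a = z"
    by (intro canonical_transfer_eqI se family_support re projection_family_absorb[OF x y w(1) z]) auto
  then show ?thesis by (simp add: z_def w_def)
qed

lemma nondegenerate_canonical_transfer_action:
  "nondegenerate_transfer_action \<alpha> (\<lambda>x. canonical_transfer (\<alpha> x) (P x))"
  unfolding nondegenerate_transfer_action_iff transfer_action_def
proof (intro conjI allI impI)
  fix x :: 'g assume x: "0 \<le> x"
  note tm = canonical_transfer_map[OF endo_semigroup_star_endo[OF x] family_support[OF x] re[OF x]]
  show "continuous_on UNIV (canonical_transfer (\<alpha> x) (P x))"
    by (rule canonical_transfer_continuous[OF endo_semigroup_star_endo[OF x] family_support[OF x] re[OF x]])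
  show "clinear_map (canonical_transfer (\<alpha> x) (P x))" by (rule transfer_map_clinear[OF tm])
  show "positive_map (canonical_transfer (\<alpha> x) (P x))" by (rule transfer_map_positive[OF tm])
  show "canonical_transfer (\<alpha> x) (P x) (\<alpha> x a * b) = a * canonical_transfer (\<alpha> x) (P x) b" for a b
    by (rule transfer_map_left[OF tm])
  show "nondegenerate_map (\<alpha> x) (canonical_transfer (\<alpha> x) (P x))"
    by (rule complete_map_nondegenerate[OF endo_semigroup_star_endo[OF x]
          canonical_transfer_complete[OF endo_semigroup_star_endo[OF x] family_support[OF x] re[OF x]]])
next
  fix x y :: 'g assume "0 \<le> x" "0 \<le> y"
  then show "canonical_transfer (\<alpha> (x + y)) (P (x + y)) = canonical_transfer (\<alpha> y) (P y) \<circ> canonical_transfer (\<alpha> x) (P x)"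
    using canonical_transfer_comp by (auto simp: fun_eq_iff)
qed

lemma transfer_action_eq_canonical:
  assumes "nondegenerate_transfer_action \<alpha> L" "0 \<le> x"
  shows "P x = L x 1" and "L x = canonical_transfer (\<alpha> x) (P x)"
proof -
  have tm: "transfer_map (\<alpha> x) (L x)" and nd: "nondegenerate_map (\<alpha> x) (L x)"
    using assms transfer_action_map by (simp_all add: nondegenerate_transfer_action_iff)
  show "P x = L x 1"
    by (rule support_projection_unique[OF endo_semigroup_star_endo[OF assms(2)] family_support[OF assms(2)]
          nondegenerate_map_support_projection[OF tm nd]])
  show "L x = canonical_transfer (\<alpha> x) (P x)"
    by (rule eq_canonical_transfer[OF endo_semigroup_star_endo[OF assms(2)] family_support[OF assms(2)] re[OF assms(2)] tm nd])
qed

end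

lemma projection_family_unique:
  assumes "projection_family \<alpha> P" "projection_family \<alpha> P'" "0 \<le> x"
  shows "P x = P' x"
  using support_projection_unique[OF endo_semigroup_star_endo[OF assms(3)]] assms
  by (simp add: projection_family_iff)

lemma complete_transfer_action_determined:
  assumes "complete_transfer_action \<alpha> L0"
    and "complete_transfer_action \<alpha> L \<or> nondegenerate_transfer_action \<alpha> L"
    and "projection_family \<alpha> P" "0 \<le> x"
  shows "P x = L x 1 \<and> L x = canonical_transfer (\<alpha> x) (P x)"
  using transfer_action_eq_canonical[OF assms(3) complete_transfer_action_range[OF assms(1)]]
    complete_imp_nondegenerate_transfer_action assms(2,4) by blast

lemma complete_transfer_action_unique:
  assumes "complete_transfer_action \<alpha> L0"
    and "complete_transfer_action \<alpha> L \<or> nondegenerate_transfer_action \<alpha> L"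
    and "complete_transfer_action \<alpha> L' \<or> nondegenerate_transfer_action \<alpha> L'" "0 \<le> x"
  shows "L x = L' x"
proof -
  have "projection_family \<alpha> (\<lambda>x. L0 x 1)"
    using projection_family_transfer_one[OF complete_imp_nondegenerate_transfer_action[OF assms(1)]
        complete_transfer_action_range[OF assms(1)]] .
  then show ?thesis using complete_transfer_action_determined[OF assms(1)] assms(2-4) by metis
qed

lemma hereditary_range_iff_corner:
  assumes "0 \<le> x"
  shows "hereditary_subalgebra (range (\<alpha> x)) \<longleftrightarrow> range (\<alpha> x) = corner (\<alpha> x 1)"
  using hereditary_range_eq_corner[OF endo_semigroup_star_endo[OF assms]]
    hereditary_corner[OF star_endo_one_idem star_endo_one_selfadjoint, OF endo_semigroup_star_endo[OF assms]
      endo_semigroup_star_endo[OF assms]]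
  by auto

lemma complete_iff_nondegenerate_hereditary:
  "(\<exists>L. complete_transfer_action \<alpha> L) \<longleftrightarrow>
     (\<exists>L. nondegenerate_transfer_action \<alpha> L) \<and> (\<forall>x. 0 \<le> x \<longrightarrow> hereditary_subalgebra (range (\<alpha> x)))"
proof
  assume "\<exists>L. complete_transfer_action \<alpha> L"
  then obtain L where L: "complete_transfer_action \<alpha> L" ..
  have "\<forall>x. 0 \<le> x \<longrightarrow> hereditary_subalgebra (range (\<alpha> x))"
    using complete_transfer_action_range[OF L] hereditary_range_iff_corner by simp
  then show "(\<exists>L. nondegenerate_transfer_action \<alpha> L) \<and> (\<forall>x. 0 \<le> x \<longrightarrow> hereditary_subalgebra (range (\<alpha> x)))"
    using complete_imp_nondegenerate_transfer_action[OF L] by blast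
next
  assume "(\<exists>L. nondegenerate_transfer_action \<alpha> L) \<and> (\<forall>x. 0 \<le> x \<longrightarrow> hereditary_subalgebra (range (\<alpha> x)))"
  then obtain L where L: "nondegenerate_transfer_action \<alpha> L"
    and "\<And>x. 0 \<le> x \<Longrightarrow> range (\<alpha> x) = corner (\<alpha> x 1)"
    using hereditary_range_iff_corner by blast
  then show "\<exists>L. complete_transfer_action \<alpha> L" using nondegenerate_imp_complete_transfer_action by blast
qed

lemma nondegenerate_hereditary_iff_projection_family:
  "((\<exists>L. nondegenerate_transfer_action \<alpha> L) \<and> (\<forall>x. 0 \<le> x \<longrightarrow> hereditary_subalgebra (range (\<alpha> x))))
     \<longleftrightarrow> (\<exists>P. projection_family \<alpha> P) \<and> (\<forall>x. 0 \<le> x \<longrightarrow> range (\<alpha> x) = corner (\<alpha> x 1))"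
proof
  assume "(\<exists>L. nondegenerate_transfer_action \<alpha> L) \<and> (\<forall>x. 0 \<le> x \<longrightarrow> hereditary_subalgebra (range (\<alpha> x)))"
  then obtain L where L: "nondegenerate_transfer_action \<alpha> L"
    and re: "\<And>x. 0 \<le> x \<Longrightarrow> range (\<alpha> x) = corner (\<alpha> x 1)"
    using hereditary_range_iff_corner by blast
  then show "(\<exists>P. projection_family \<alpha> P) \<and> (\<forall>x. 0 \<le> x \<longrightarrow> range (\<alpha> x) = corner (\<alpha> x 1))"
    using projection_family_transfer_one[OF L re] by blast
next
  assume "(\<exists>P. projection_family \<alpha> P) \<and> (\<forall>x. 0 \<le> x \<longrightarrow> range (\<alpha> x) = corner (\<alpha> x 1))"
  then obtain P where P: "projection_family \<alpha> P"
    and re: "\<And>x. 0 \<le> x \<Longrightarrow> range (\<alpha> x) = corner (\<alpha> x 1)" by blast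
  then show "(\<exists>L. nondegenerate_transfer_action \<alpha> L) \<and> (\<forall>x. 0 \<le> x \<longrightarrow> hereditary_subalgebra (range (\<alpha> x)))"
    using nondegenerate_canonical_transfer_action[OF P re] hereditary_range_iff_corner by blast
qed

end

theorem theorem2p4:
  fixes \<alpha> :: "'g::linordered_ab_group_add \<Rightarrow> 'a::cstar_algebra \<Rightarrow> 'a"
  assumes "endo_semigroup \<alpha>"
  shows "((\<exists>L. complete_transfer_action \<alpha> L) \<longleftrightarrow>
            ((\<exists>L. nondegenerate_transfer_action \<alpha> L)
             \<and> (\<forall>x. 0 \<le> x \<longrightarrow> hereditary_subalgebra (range (\<alpha> x)))))
       \<and> (((\<exists>L. nondegenerate_transfer_action \<alpha> L)
             \<and> (\<forall>x. 0 \<le> x \<longrightarrow> hereditary_subalgebra (range (\<alpha> x)))) \<longleftrightarrow>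
          ((\<exists>P. projection_family \<alpha> P)
             \<and> (\<forall>x. 0 \<le> x \<longrightarrow> range (\<alpha> x) = {\<alpha> x 1 * a * \<alpha> x 1 | a. True})))
       \<and> ((\<exists>L. complete_transfer_action \<alpha> L) \<longrightarrow>
            (\<forall>L L'. (complete_transfer_action \<alpha> L \<or> nondegenerate_transfer_action \<alpha> L)
                  \<and> (complete_transfer_action \<alpha> L' \<or> nondegenerate_transfer_action \<alpha> L')
                  \<longrightarrow> (\<forall>x. 0 \<le> x \<longrightarrow> L x = L' x))
          \<and> (\<forall>P P'. projection_family \<alpha> P \<and> projection_family \<alpha> P'
                  \<longrightarrow> (\<forall>x. 0 \<le> x \<longrightarrow> P x = P' x))
          \<and> (\<forall>L P. (complete_transfer_action \<alpha> L \<or> nondegenerate_transfer_action \<alpha> L)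
                  \<and> projection_family \<alpha> P
                  \<longrightarrow> (\<forall>x. 0 \<le> x \<longrightarrow> P x = L x 1
                        \<and> (\<forall>a. L x a = the_inv_into (range (\<lambda>b. P x * b)) (\<alpha> x)
                                          (\<alpha> x 1 * a * \<alpha> x 1)))))"
proof -
  have corners: "{\<alpha> x 1 * a * \<alpha> x 1 | a. True} = corner (\<alpha> x 1)" for x by (simp add: corner_def)
  show ?thesis
    apply (intro conjI impI allI)
    subgoal by (rule complete_iff_nondegenerate_hereditary[OF assms])
    subgoal by (simp only: corners nondegenerate_hereditary_iff_projection_family[OF assms])
    subgoal using complete_transfer_action_unique[OF assms] by blast
    subgoal using projection_family_unique[OF assms] by blast
    subgoal using complete_transfer_action_determined[OF assms] by blast
    subgoal using complete_transfer_action_determined[OF assms] by (metis canonical_transfer_def)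
    done
qed

end
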